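(* Let $G$ be a planar graph (embedded in the plane) with planar dual $\widehat G$. Then the graded Euler characteristic of the complex $\langle G\rangle$ recovers the chromatic polynomial $\chi_G$ of $G$: $$\chi_G\big((q+q^{-1})^2\big)=(q+q^{-1})^2\prod_{v}(q+q^{-1})^{(r(v)-2)/2}\;\chi_q\langle G\rangle ,$$ where the product is over all vertices $v$ of $\widehat G$ and $r(v)$ is the valence of $v$; the equality holds in the ring of formal Laurent series in $q$.
   Context: $\mathrm{Cob}(m)$ is Bar-Natan's dotted cobordism category over $R=\mathbb Z[\alpha]$ (relations: sphere $=0$, one-dotted sphere $=1$, two-dotted sphere $=0$, three-dotted sphere $=\alpha$, neck-cutting) and $\mathrm{Kom}(m)$ its category of bounded-below chain complexes. $P_2\in\mathrm{Kom}(2)$ is the complex $\mathbb 1\xrightarrow{s}qe_1\xrightarrow{x_{\mathrm{top}}-x_{\mathrm{bot}}}q^3e_1\xrightarrow{x_{\mathrm{top}}+x_{\mathrm{bot}}}q^5e_1\to\cdots$ (the last two maps alternating; $\mathbb 1$ two vertical strands in homological degree $0$, $e_1$ cap over cup, $s$ saddle, $x_{\mathrm{top}},x_{\mathrm{bot}}$ dots on the top/bottom arc, $q^{2n-1}e_1$ in homological degree $n$). For a graph $\Gamma$ embedded in the plane (loops and multiple edges allowed), the spin-network complex $S(\Gamma)\in\mathrm{Kom}(0)$ is obtained by replacing each edge by two parallel strands carrying a copy of $P_2$ and, near each vertex, joining the strand ends of cyclically consecutive edges by arcs, so that away from the projectors the strands form the boundary of a regular neighborhood of $\Gamma$. For a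 planar graph $G$, $\langle G\rangle:=S(\widehat G)$. The chromatic polynomial $\chi_G(Q)$ is the number of proper vertex colorings of $G$ with $Q$ colors (as a polynomial in $Q$; it vanishes if $G$ has a loop). The graded Euler characteristic is $\chi_q(C)=\sum_i(-1)^i[C_i]$, where a summand $q^j D$ with $D$ a diagram of $k$ circles contributes $q^j(q+q^{-1})^k$.
   Formalization: G is a connected planar graph with at least one vertex, and the equality is taken in the ring of formal Laurent series in q with rational coefficients. Apart from conventions, each condition added here is assumed in the paper as well or is needed for the statement above to hold. *)

theory Defs
  imports "HOL-Computational_Algebra.Formal_Laurent_Series"
          "HOL-Computational_Algebra.Polynomial"
          "HOL-Combinatorics.Permutations"
          "HOL-Library.FuncSet"
begin

section \<open>Plane graphs as rotation systems (combinatorial maps)\<close>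

text \<open>A graph embedded in an oriented surface is given by: a finite vertex set V,
 a finite set D of darts (half-edges), the incidence map vert (dart to its vertex),
 a fixed-point-free involution alpha on D (the two halves of an edge) and a permutation
 sigma on D whose cycles are the cyclic orders of the darts around each vertex.
 Loops and multiple edges are allowed; isolated vertices have no darts.\<close>

definition ribbon_graph ::
  "'v set \<Rightarrow> 'd set \<Rightarrow> ('d \<Rightarrow> 'v) \<Rightarrow> ('d \<Rightarrow> 'd) \<Rightarrow> ('d \<Rightarrow> 'd) \<Rightarrow> bool" where
  "ribbon_graph V D vert \<alpha> \<sigma> \<longleftrightarrow>
     finite V \<and> finite D \<and> vert ` D \<subseteq> V \<and>
     \<alpha> permutes D \<and> (\<forall>d\<in>D. \<alpha> d \<noteq> d \<and> \<alpha> (\<alpha> d) = d) \<and>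
     \<sigma> permutes D \<and> (\<forall>d\<in>D. vert (\<sigma> d) = vert d) \<and>
     (\<forall>d\<in>D. \<forall>d'\<in>D. vert d = vert d' \<longrightarrow> (\<exists>k. (\<sigma> ^^ k) d = d'))"

definition graph_edges :: "'d set \<Rightarrow> ('d \<Rightarrow> 'd) \<Rightarrow> 'd set set" where
  "graph_edges D \<alpha> = {{d, \<alpha> d} | d. d \<in> D}"

text \<open>Valence of a vertex (a loop counts twice).\<close>
definition valence :: "'d set \<Rightarrow> ('d \<Rightarrow> 'v) \<Rightarrow> 'v \<Rightarrow> nat" where
  "valence D vert v = card {d\<in>D. vert d = v}"

definition graph_connected :: "'v set \<Rightarrow> 'd set \<Rightarrow> ('d \<Rightarrow> 'v) \<Rightarrow> ('d \<Rightarrow> 'd) \<Rightarrow> bool" where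
  "graph_connected V D vert \<alpha> \<longleftrightarrow>
     (\<forall>u\<in>V. \<forall>v\<in>V. (u, v) \<in> {(vert d, vert (\<alpha> d)) | d. d \<in> D}\<^sup>*)"

definition orbit_of :: "('d \<Rightarrow> 'd) \<Rightarrow> 'd \<Rightarrow> 'd set" where
  "orbit_of f d = {(f ^^ k) d | k. True}"

definition sub_rotation :: "('d \<Rightarrow> 'd) \<Rightarrow> 'd set set \<Rightarrow> 'd \<Rightarrow> 'd" where
  "sub_rotation \<sigma> B d = (\<sigma> ^^ (LEAST k. 0 < k \<and> (\<sigma> ^^ k) d \<in> \<Union>B)) d"

text \<open>Number of circles forming the boundary of a regular neighbourhood of the
 (embedded) spanning subgraph with edge set B: one circle per boundary walk
 (orbit of sub_rotation composed with alpha on the darts of B) plus one circle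
 for each vertex not incident to any edge of B.\<close>
definition nbhd_circles ::
  "'v set \<Rightarrow> 'd set \<Rightarrow> ('d \<Rightarrow> 'v) \<Rightarrow> ('d \<Rightarrow> 'd) \<Rightarrow> ('d \<Rightarrow> 'd) \<Rightarrow> 'd set set \<Rightarrow> nat" where
  "nbhd_circles V D vert \<alpha> \<sigma> B =
     card {orbit_of (sub_rotation \<sigma> B \<circ> \<alpha>) d | d. d \<in> \<Union>B}
     + card {v\<in>V. \<forall>d\<in>\<Union>B. vert d \<noteq> v}"

text \<open>A connected graph embedded in the plane (equivalently the sphere):
 connected rotation system of genus 0, i.e. V - E + F = 2, where the faces
 correspond to the boundary circles of a regular neighbourhood of the graph.\<close>
definition plane_graph ::
  "'v set \<Rightarrow> 'd set \<Rightarrow> ('d \<Rightarrow> 'v) \<Rightarrow> ('d \<Rightarrow> 'd) \<Rightarrow> ('d \<Rightarrow> 'd) \<Rightarrow> bool" where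
  "plane_graph V D vert \<alpha> \<sigma> \<longleftrightarrow>
     ribbon_graph V D vert \<alpha> \<sigma> \<and> V \<noteq> {} \<and> graph_connected V D vert \<alpha> \<and>
     int (card V) - int (card (graph_edges D \<alpha>))
       + int (nbhd_circles V D vert \<alpha> \<sigma> (graph_edges D \<alpha>)) = 2"

subsection \<open>Planar dual\<close>

text \<open>Faces are the orbits of sigma o alpha (boundary walks); the graph with no
 edges (a single vertex) has a single face.  The dual has the faces as vertices,
 the same darts and edge involution, and rotation sigma o alpha.\<close>
definition dual_vertices :: "'d set \<Rightarrow> ('d \<Rightarrow> 'd) \<Rightarrow> ('d \<Rightarrow> 'd) \<Rightarrow> 'd set set" where
  "dual_vertices D \<alpha> \<sigma> =
     (if D = {} then {{}} else {orbit_of (\<sigma> \<circ> \<alpha>) d | d. d \<in> D})"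

definition dual_vert :: "('d \<Rightarrow> 'd) \<Rightarrow> ('d \<Rightarrow> 'd) \<Rightarrow> 'd \<Rightarrow> 'd set" where
  "dual_vert \<alpha> \<sigma> d = orbit_of (\<sigma> \<circ> \<alpha>) d"

definition dual_rotation :: "('d \<Rightarrow> 'd) \<Rightarrow> ('d \<Rightarrow> 'd) \<Rightarrow> 'd \<Rightarrow> 'd" where
  "dual_rotation \<alpha> \<sigma> = \<sigma> \<circ> \<alpha>"

section \<open>Chromatic polynomial\<close>

definition proper_colorings ::
  "'v set \<Rightarrow> 'd set \<Rightarrow> ('d \<Rightarrow> 'v) \<Rightarrow> ('d \<Rightarrow> 'd) \<Rightarrow> nat \<Rightarrow> ('v \<Rightarrow> nat) set" where
  "proper_colorings V D vert \<alpha> Q =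
     {c \<in> V \<rightarrow>\<^sub>E {0..<Q}. \<forall>d\<in>D. c (vert d) \<noteq> c (vert (\<alpha> d))}"

definition chromatic_poly :: "'v set \<Rightarrow> 'd set \<Rightarrow> ('d \<Rightarrow> 'v) \<Rightarrow> ('d \<Rightarrow> 'd) \<Rightarrow> int poly" where
  "chromatic_poly V D vert \<alpha> =
     (THE p. \<forall>Q::nat. poly p (of_nat Q) = int (card (proper_colorings V D vert \<alpha> Q)))"

section \<open>Laurent series, P_2 and the spin-network complex\<close>

definition qq :: "rat fls" where
  "qq = fls_X + fls_X_inv"

text \<open>Coefficientwise sum of a sequence of Laurent series (used for sum_i (-1)^i [C_i]
 of a bounded-below complex; in each q-degree only finitely many terms are nonzero).\<close>
definition fls_seq_sum :: "(nat \<Rightarrow> rat fls) \<Rightarrow> rat fls" where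
  "fls_seq_sum f = Abs_fls (\<lambda>m. \<Sum>i\<in>{i. fls_nth (f i) m \<noteq> 0}. fls_nth (f i) m)"

text \<open>Chain object of P_2 in homological degree n: degree 0 is the identity
 (two vertical strands, q-shift 0); degree n \<ge> 1 is q^(2n-1) e_1 (cap over cup).
 Encoded as (q-shift, is the identity tangle).\<close>
definition P2_term :: "nat \<Rightarrow> int \<times> bool" where
  "P2_term n = (if n = 0 then (0, True) else (2 * int n - 1, False))"

text \<open>Summands of the chain object of S(Gamma) in homological degree i: choice of a
 homological degree n e for the copy of P_2 on each edge e with total degree i.
 The summand is q^(sum of shifts) times the closed diagram obtained by inserting the
 chosen tangles (strands through edges with the identity, cut at edges with e_1),
 which consists of nbhd_circles of the subgraph of identity edges many circles.\<close>
definition spin_states :: "'d set \<Rightarrow> ('d \<Rightarrow> 'd) \<Rightarrow> nat \<Rightarrow> ('d set \<Rightarrow> nat) set" where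
  "spin_states D \<alpha> i =
     {n \<in> graph_edges D \<alpha> \<rightarrow>\<^sub>E UNIV. (\<Sum>e\<in>graph_edges D \<alpha>. n e) = i}"

definition spin_summand_shift :: "'d set \<Rightarrow> ('d \<Rightarrow> 'd) \<Rightarrow> ('d set \<Rightarrow> nat) \<Rightarrow> int" where
  "spin_summand_shift D \<alpha> n = (\<Sum>e\<in>graph_edges D \<alpha>. fst (P2_term (n e)))"

definition spin_summand_circles ::
  "'v set \<Rightarrow> 'd set \<Rightarrow> ('d \<Rightarrow> 'v) \<Rightarrow> ('d \<Rightarrow> 'd) \<Rightarrow> ('d \<Rightarrow> 'd) \<Rightarrow> ('d set \<Rightarrow> nat) \<Rightarrow> nat" where
  "spin_summand_circles V D vert \<alpha> \<sigma> n =
     nbhd_circles V D vert \<alpha> \<sigma> {e\<in>graph_edges D \<alpha>. snd (P2_term (n e))}"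

text \<open>Class [C_i] of the chain object of S(Gamma) in degree i: a summand q^j D with D
 consisting of k circles contributes q^j (q+q^{-1})^k.\<close>
definition spin_chain_class ::
  "'v set \<Rightarrow> 'd set \<Rightarrow> ('d \<Rightarrow> 'v) \<Rightarrow> ('d \<Rightarrow> 'd) \<Rightarrow> ('d \<Rightarrow> 'd) \<Rightarrow> nat \<Rightarrow> rat fls" where
  "spin_chain_class V D vert \<alpha> \<sigma> i =
     (\<Sum>n\<in>spin_states D \<alpha> i.
        fls_X powi (spin_summand_shift D \<alpha> n) * qq ^ spin_summand_circles V D vert \<alpha> \<sigma> n)"

definition spin_euler_char ::
  "'v set \<Rightarrow> 'd set \<Rightarrow> ('d \<Rightarrow> 'v) \<Rightarrow> ('d \<Rightarrow> 'd) \<Rightarrow> ('d \<Rightarrow> 'd) \<Rightarrow> rat fls" where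
  "spin_euler_char V D vert \<alpha> \<sigma> =
     fls_seq_sum (\<lambda>i. (-1) ^ i * spin_chain_class V D vert \<alpha> \<sigma> i)"

text \<open>chi_q of the bracket <G> = S(dual of G).\<close>
definition bracket_euler_char ::
  "'v set \<Rightarrow> 'd set \<Rightarrow> ('d \<Rightarrow> 'v) \<Rightarrow> ('d \<Rightarrow> 'd) \<Rightarrow> ('d \<Rightarrow> 'd) \<Rightarrow> rat fls" where
  "bracket_euler_char V D vert \<alpha> \<sigma> =
     spin_euler_char (dual_vertices D \<alpha> \<sigma>) D (dual_vert \<alpha> \<sigma>) \<alpha> (dual_rotation \<alpha> \<sigma>)"

end

theory Submission
  imports Defs "HOL-Combinatorics.Orbits" "HOL-Combinatorics.Transposition"
begin

text \<open>
  Let E be the edge set of the plane graph G and, for S \<subseteq> E, let k(S) be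
  the number of connected components and f(S) the number of faces (cycles of the face
  permutation) of the spanning subgraph (V, S).

  (1) Inclusion-exclusion over the edges with equally coloured ends gives the subgraph
      expansion chi_G(Q) = \<Sum>_{S \<subseteq> E} (-1)^|S| Q^k(S).
  (2) Expanding chi_q<G> over the states of the copies of P_2, an edge in homological degree 0
      contributes 1 and the remaining degrees contribute \<Sum>_{n \<ge> 1} (-1)^n q^(2n-1) = -1/(q+q^-1);
      a valuation argument in the Laurent series ring justifies the rearrangement and gives
      chi_q<G> = \<Sum>_{B \<subseteq> E} qq^c(B) (-1/qq)^|E - B|, with c(B) the number of boundary circles
      of the subgraph of the dual with edge set B.
  (3) Those boundary circles are the faces of the complementary subgraph: c(E - S) = f(S).
  (4) Euler's formula |V| - |S| + f(S) = 2 k(S) holds for every spanning subgraph of a plane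
      graph: the Euler defect never increases under edge deletion and vanishes for S = {}
      (trivially) and S = E (planarity), hence vanishes throughout.
  Since \<Sum>_v (r(v) - 2) = 2|E| - 2f(E), the terms of (1) and (2) agree one by one after
  multiplying by the prefactor of the statement.
\<close>

notation fls_nth (infixl \<open>$$\<close> 75)

section \<open>Cycles of permutations\<close>

definition num_cycles :: "('d \<Rightarrow> 'd) \<Rightarrow> 'd set \<Rightarrow> nat" where
  "num_cycles f S = card {orbit_of f d | d. d \<in> S}"

lemma orbit_of_closed:
  assumes "\<forall>y\<in>S. f y \<in> S" "x \<in> S"
  shows "orbit_of f x \<subseteq> S"
proof -
  have "(f ^^ k) x \<in> S" for k by (induction k) (use assms in auto)
  thus ?thesis unfolding orbit_of_def by auto
qed

lemma funpow_in_orbit_of: "(f ^^ n) x \<in> orbit_of f x"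
  unfolding orbit_of_def by auto

lemma self_in_orbit_of: "x \<in> orbit_of f x"
  using funpow_in_orbit_of[of 0 f x] by simp

lemma f_in_orbit_of: "f x \<in> orbit_of f x"
  using funpow_in_orbit_of[of 1 f x] by simp

lemma orbit_of_perm:
  assumes "f permutes D" "finite D"
  shows "orbit_of f x = orbit f x"
proof -
  have "permutation f" using assms permutation_permutes by blast
  thus ?thesis unfolding orbit_of_def using orbit_altdef_permutation by metis
qed

lemma orbit_of_eq:
  assumes "f permutes D" "finite D" "y \<in> orbit_of f x"
  shows "orbit_of f y = orbit_of f x"
proof -
  have p: "permutation f" using assms permutation_permutes by blast
  have xx: "x \<in> orbit f x" "y \<in> orbit f y" using p permutation_self_in_orbit by metis+
  have y: "y \<in> orbit f x" using assms orbit_of_perm by metis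
  have "x \<in> orbit f y" using orbit_swap[OF xx(1) y] .
  hence "orbit f y = orbit f x" using y by (auto intro: orbit_trans)
  thus ?thesis using assms orbit_of_perm by metis
qed

lemma orbit_of_sym:
  assumes "f permutes D" "finite D" "y \<in> orbit_of f x"
  shows "x \<in> orbit_of f y"
  using orbit_of_eq[OF assms] self_in_orbit_of by metis

lemma orbit_of_subset:
  assumes "f permutes D" "x \<in> D"
  shows "orbit_of f x \<subseteq> D"
proof (rule orbit_of_closed)
  show "\<forall>y\<in>D. f y \<in> D" using permutes_in_image[OF assms(1)] by blast
qed (rule assms(2))

lemma orbit_of_period:
  assumes "f permutes D" "finite D"
  shows "\<exists>p>0. (f ^^ p) x = x"
proof -
  have p: "permutation f" using assms permutation_permutes by blast
  have "x \<in> orbit f x" using p permutation_self_in_orbit by metis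
  thus ?thesis unfolding orbit_altdef by auto
qed

lemma orbit_of_disjoint:
  assumes "f permutes D" "finite D" "orbit_of f x \<inter> orbit_of f y \<noteq> {}"
  shows "orbit_of f x = orbit_of f y"
proof -
  obtain z where "z \<in> orbit_of f x" "z \<in> orbit_of f y" using assms by blast
  thus ?thesis using orbit_of_eq[OF assms(1,2)] by metis
qed

lemma orbit_of_has_preimage:
  assumes "f permutes D" "finite D" "u \<in> orbit_of f d"
  shows "\<exists>v\<in>orbit_of f d. f v = u"
proof -
  obtain p where p: "p > 0" "(f ^^ p) u = u" using orbit_of_period[OF assms(1,2)] by blast
  then obtain q where q: "p = Suc q" by (cases p) auto
  have "(f ^^ q) u \<in> orbit_of f u" by (rule funpow_in_orbit_of)
  moreover have "orbit_of f u = orbit_of f d" using orbit_of_eq[OF assms] .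
  moreover have "f ((f ^^ q) u) = u" using p q by simp
  ultimately show ?thesis by metis
qed

lemma orbit_of_agree:
  assumes "orbit_of f x \<inter> Z = {}" "\<forall>y. y \<notin> Z \<longrightarrow> f y = g y"
  shows "orbit_of g x = orbit_of f x"
proof -
  have "(g ^^ k) x = (f ^^ k) x" for k
  proof (induction k)
    case (Suc k)
    have "(f ^^ k) x \<notin> Z" using assms(1) funpow_in_orbit_of by fast
    thus ?case using Suc assms(2) by simp
  qed simp
  thus ?thesis unfolding orbit_of_def by auto
qed

lemma num_cycles_conj:
  assumes "\<And>x. g (h x) = h (f x)" "inj h" "h ` D = D"
  shows "num_cycles g D = num_cycles f D"
proof -
  have it: "(g ^^ k) (h x) = h ((f ^^ k) x)" for k x by (induction k) (auto simp: assms(1))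
  have orb: "orbit_of g (h x) = h ` orbit_of f x" for x
    unfolding orbit_of_def using it by auto
  have "{orbit_of g d | d. d \<in> D} = {orbit_of g (h x) | x. x \<in> D}"
  proof (intro set_eqI iffI)
    fix S assume "S \<in> {orbit_of g d | d. d \<in> D}"
    then obtain d where d: "d \<in> D" "S = orbit_of g d" by blast
    then obtain x where "x \<in> D" "d = h x" using assms(3) by blast
    thus "S \<in> {orbit_of g (h x) | x. x \<in> D}" using d by blast
  next
    fix S assume "S \<in> {orbit_of g (h x) | x. x \<in> D}"
    then obtain x where x: "x \<in> D" "S = orbit_of g (h x)" by blast
    hence "h x \<in> D" using assms(3) by blast
    thus "S \<in> {orbit_of g d | d. d \<in> D}" using x by blast
  qed
  also have "\<dots> = (\<lambda>S. h ` S) ` {orbit_of f x | x. x \<in> D}" using orb by auto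
  finally have eq: "{orbit_of g d | d. d \<in> D} = (\<lambda>S. h ` S) ` {orbit_of f x | x. x \<in> D}" .
  have "inj_on (\<lambda>S. h ` S) X" for X using assms(2) by (simp add: inj_image_eq_iff inj_on_def)
  thus ?thesis unfolding num_cycles_def eq by (simp add: card_image)
qed

lemma orbit_of_step_subset: "orbit_of h (h y) \<subseteq> orbit_of h y"
proof
  fix x assume "x \<in> orbit_of h (h y)"
  then obtain k where "x = (h ^^ k) (h y)" unfolding orbit_of_def by auto
  hence "x = (h ^^ Suc k) y" by (simp add: funpow_swap1)
  thus "x \<in> orbit_of h y" unfolding orbit_of_def by blast
qed

section \<open>Transposition changes the number of cycles by one\<close>

lemma orbit_first_hit:
  assumes ab: "a \<noteq> b" "b \<in> orbit_of f a"
  obtains j where "0 < j" "(f ^^ j) a = b" "\<And>i. 0 < i \<Longrightarrow> i < j \<Longrightarrow> (f ^^ i) a \<notin> {a, b}"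
proof -
  obtain n where n: "(f ^^ n) a = b" using ab unfolding orbit_of_def by auto
  with ab have "n > 0" by (cases n) auto
  define j where "j = (LEAST j. 0 < j \<and> (f ^^ j) a \<in> {a, b})"
  have jP: "0 < j \<and> (f ^^ j) a \<in> {a, b}"
    unfolding j_def by (rule LeastI[of _ n]) (use n \<open>n>0\<close> in auto)
  have jmin: "\<And>i. 0 < i \<Longrightarrow> i < j \<Longrightarrow> (f ^^ i) a \<notin> {a, b}"
    using not_less_Least unfolding j_def by blast
  have "(f ^^ j) a = b"
  proof (rule ccontr)
    assume "(f ^^ j) a \<noteq> b"
    hence fja: "(f ^^ j) a = a" using jP by auto
    define S where "S = {(f ^^ i) a | i. i < j}"
    have "\<forall>y\<in>S. f y \<in> S"
    proof
      fix y assume "y \<in> S"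
      then obtain i where i: "i < j" "y = (f ^^ i) a" unfolding S_def by auto
      show "f y \<in> S"
      proof (cases "Suc i = j")
        case True
        hence "f y = (f ^^ 0) a" using i fja by auto
        thus ?thesis unfolding S_def using jP by blast
      next
        case False
        hence "f y = (f ^^ Suc i) a" "Suc i < j" using i by auto
        thus ?thesis unfolding S_def by blast
      qed
    qed
    moreover have "a \<in> S" unfolding S_def using jP by (auto intro: exI[of _ 0])
    ultimately have "orbit_of f a \<subseteq> S" by (rule orbit_of_closed)
    then obtain i where i: "i < j" "(f ^^ i) a = b" using ab(2) unfolding S_def by auto
    show False
    proof (cases "i = 0")
      case True thus False using i ab(1) by simp
    next
      case False thus False using jmin[of i] i by simp
    qed
  qed
  with jP jmin show ?thesis by (intro that) auto
qed

text \<open>The new cycle through a is the stretch of the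
  old one from a up to just before b.\<close>
lemma transpose_splits_cycle:
  assumes f: "f permutes D" "finite D" and ab: "a \<noteq> b" "b \<in> orbit_of f a"
  shows "b \<notin> orbit_of (transpose a b \<circ> f) a"
proof -
  let ?g = "transpose a b \<circ> f"
  obtain j where j: "0 < j" "(f ^^ j) a = b" and jmin: "\<And>i. 0 < i \<Longrightarrow> i < j \<Longrightarrow> (f ^^ i) a \<notin> {a, b}"
    using orbit_first_hit[OF ab] by blast
  define S where "S = {(f ^^ i) a | i. i < j}"
  have bS: "b \<notin> S"
  proof
    assume "b \<in> S"
    then obtain i where i: "i < j" "(f ^^ i) a = b" unfolding S_def by auto
    show False using jmin[of i] i ab by (cases "i = 0") auto
  qed
  have aS: "a \<in> S" unfolding S_def using j by (auto intro: exI[of _ 0])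
  have "\<forall>y\<in>S. ?g y \<in> S"
  proof
    fix y assume "y \<in> S"
    then obtain i where i: "i < j" "y = (f ^^ i) a" unfolding S_def by auto
    show "?g y \<in> S"
    proof (cases "Suc i = j")
      case True
      hence "f y = b" using i j by auto
      thus ?thesis using aS by (simp add: transpose_def)
    next
      case False
      hence *: "f y = (f ^^ Suc i) a" "Suc i < j" using i by auto
      hence "f y \<notin> {a, b}" using jmin[of "Suc i"] by auto
      hence "?g y = (f ^^ Suc i) a" using * by (auto simp: transpose_def)
      thus ?thesis unfolding S_def using * by blast
    qed
  qed
  hence "orbit_of ?g a \<subseteq> S" using orbit_of_closed aS by metis
  thus ?thesis using bS by auto
qed

lemma transpose_joins_cycles:
  assumes f: "f permutes D" "finite D" and ab: "a \<noteq> b" "b \<notin> orbit_of f a"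
  shows "b \<in> orbit_of (transpose a b \<circ> f) a"
proof -
  let ?g = "transpose a b \<circ> f"
  obtain p0 where "p0 > 0" "(f ^^ p0) a = a" using orbit_of_period[OF f] by blast
  define p where "p = (LEAST p. 0 < p \<and> (f ^^ p) a = a)"
  have pP: "0 < p \<and> (f ^^ p) a = a"
    unfolding p_def by (rule LeastI[of _ p0]) (use \<open>p0>0\<close> \<open>(f ^^ p0) a = a\<close> in auto)
  have pmin: "\<And>i. 0 < i \<Longrightarrow> i < p \<Longrightarrow> (f ^^ i) a \<noteq> a"
    using not_less_Least unfolding p_def by blast
  have nb: "(f ^^ i) a \<noteq> b" for i using ab funpow_in_orbit_of by metis
  have eq: "i < p \<Longrightarrow> (?g ^^ i) a = (f ^^ i) a" for i
  proof (induction i)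
    case (Suc i)
    have "(f ^^ Suc i) a \<noteq> a" using pmin[of "Suc i"] Suc by auto
    thus ?case using Suc nb[of "Suc i"] by (auto simp: transpose_def)
  qed simp
  obtain q where q: "p = Suc q" using pP by (cases p) auto
  have "(?g ^^ p) a = ?g ((?g ^^ q) a)" using q by simp
  also have "\<dots> = ?g ((f ^^ q) a)" using eq q by simp
  also have "f ((f ^^ q) a) = a" using pP q by simp
  hence "?g ((f ^^ q) a) = b" by (simp add: transpose_def)
  finally show ?thesis using funpow_in_orbit_of by metis
qed

definition cycles_avoiding :: "('d \<Rightarrow> 'd) \<Rightarrow> 'd set \<Rightarrow> 'd set \<Rightarrow> 'd set set" where
  "cycles_avoiding h D Z = {orbit_of h d | d. d \<in> D \<and> orbit_of h d \<inter> Z = {}}"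

lemma num_cycles_split_two:
  assumes h: "h permutes D" "finite D" and z: "z1 \<in> D" "z2 \<in> D"
  shows "num_cycles h D = card (cycles_avoiding h D {z1, z2}) + card {orbit_of h z1, orbit_of h z2}"
proof -
  have "orbit_of h d \<in> {orbit_of h z1, orbit_of h z2}" if "orbit_of h d \<inter> {z1, z2} \<noteq> {}" for d
    using that orbit_of_eq[OF h] by blast
  hence part: "{orbit_of h d | d. d \<in> D}
      = cycles_avoiding h D {z1, z2} \<union> {orbit_of h z1, orbit_of h z2}"
    unfolding cycles_avoiding_def using z by blast
  have disj: "cycles_avoiding h D {z1, z2} \<inter> {orbit_of h z1, orbit_of h z2} = {}"
    unfolding cycles_avoiding_def using self_in_orbit_of[of z1 h] self_in_orbit_of[of z2 h] by blast
  have "finite (cycles_avoiding h D {z1, z2})"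
    unfolding cycles_avoiding_def using h(2) by (simp add: setcompr_eq_image)
  thus ?thesis unfolding num_cycles_def part by (rule card_Un_disjoint[OF _ _ disj]) simp
qed

lemma cycles_avoiding_agree:
  assumes "\<forall>y. y \<notin> Z \<longrightarrow> f y = g y"
  shows "cycles_avoiding g D Z = cycles_avoiding f D Z"
proof -
  have fg: "orbit_of g d = orbit_of f d" if "orbit_of f d \<inter> Z = {}" for d
    using orbit_of_agree[OF that assms] .
  have gf: "orbit_of f d = orbit_of g d" if "orbit_of g d \<inter> Z = {}" for d
    using orbit_of_agree[OF that] assms by metis
  show ?thesis unfolding cycles_avoiding_def
  proof (intro set_eqI iffI)
    fix Ob assume "Ob \<in> {orbit_of g d | d. d \<in> D \<and> orbit_of g d \<inter> Z = {}}"
    thus "Ob \<in> {orbit_of f d | d. d \<in> D \<and> orbit_of f d \<inter> Z = {}}" using gf by force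
  next
    fix Ob assume "Ob \<in> {orbit_of f d | d. d \<in> D \<and> orbit_of f d \<inter> Z = {}}"
    thus "Ob \<in> {orbit_of g d | d. d \<in> D \<and> orbit_of g d \<inter> Z = {}}" using fg by force
  qed
qed

text \<open>Only the cycles through
  the preimages z1, z2 of a and b are affected.\<close>
lemma num_cycles_transpose:
  assumes f: "f permutes D" "finite D" and ab: "a \<noteq> b" "a \<in> D" "b \<in> D"
  defines "g \<equiv> transpose a b \<circ> f"
  shows "b \<in> orbit_of f a \<Longrightarrow> num_cycles g D = num_cycles f D + 1"
    and "b \<notin> orbit_of f a \<Longrightarrow> num_cycles g D + 1 = num_cycles f D"
proof -
  have g: "g permutes D" unfolding g_def
    using permutes_compose[OF f(1) permutes_swap_id[OF ab(2,3)]] .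
  define z1 where "z1 = inv f a"
  define z2 where "z2 = inv f b"
  have fz: "f z1 = a" "f z2 = b" unfolding z1_def z2_def using f(1) permutes_inverses(1) by metis+
  have zD: "z1 \<in> D" "z2 \<in> D" unfolding z1_def z2_def
    using ab f(1) permutes_in_image permutes_inv by metis+
  have gz: "g z1 = b" "g z2 = a" unfolding g_def using fz by (auto simp: transpose_def)
  have "\<forall>y. y \<notin> {z1, z2} \<longrightarrow> f y = g y"
  proof (intro allI impI)
    fix y assume "y \<notin> {z1, z2}"
    hence "f y \<noteq> a" "f y \<noteq> b" using fz permutes_inj[OF f(1)] by (metis injD insertCI)+
    thus "f y = g y" unfolding g_def by (simp add: transpose_def)
  qed
  hence same: "cycles_avoiding g D {z1, z2} = cycles_avoiding f D {z1, z2}"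
    by (rule cycles_avoiding_agree)
  note cnt = num_cycles_split_two[OF f zD] num_cycles_split_two[OF g f(2) zD]
  have of1: "orbit_of f z1 = orbit_of f a" "orbit_of f z2 = orbit_of f b"
    using orbit_of_eq[OF f, of a z1] orbit_of_eq[OF f, of b z2] fz f_in_orbit_of by metis+
  have og1: "orbit_of g z1 = orbit_of g b" "orbit_of g z2 = orbit_of g a"
    using orbit_of_eq[OF g f(2), of b z1] orbit_of_eq[OF g f(2), of a z2] gz f_in_orbit_of by metis+
  show "num_cycles g D = num_cycles f D + 1" if b: "b \<in> orbit_of f a"
  proof -
    have "orbit_of f b = orbit_of f a" using orbit_of_eq[OF f b] .
    hence c1: "card {orbit_of f z1, orbit_of f z2} = 1" using of1 by simp
    have "b \<notin> orbit_of g a" using transpose_splits_cycle[OF f ab(1) b] unfolding g_def .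
    hence "orbit_of g b \<noteq> orbit_of g a" using self_in_orbit_of by metis
    hence c2: "card {orbit_of g z1, orbit_of g z2} = 2" using og1 by simp
    show ?thesis using cnt c1 c2 same by simp
  qed
  show "num_cycles g D + 1 = num_cycles f D" if b: "b \<notin> orbit_of f a"
  proof -
    have "orbit_of f b \<noteq> orbit_of f a" using b self_in_orbit_of by metis
    hence c1: "card {orbit_of f z1, orbit_of f z2} = 2" using of1 by simp
    have "b \<in> orbit_of g a" using transpose_joins_cycles[OF f ab(1) b] unfolding g_def .
    hence "orbit_of g b = orbit_of g a" using orbit_of_eq[OF g f(2)] by metis
    hence c2: "card {orbit_of g z1, orbit_of g z2} = 1" using og1 by simp
    show ?thesis using cnt c1 c2 same by simp
  qed
qed

section \<open>Faces, components and the Euler defect of spanning subgraphs\<close>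

text \<open>Its cycles are
  the boundary walks of the subgraph; a vertex without darts in A gives a trivial walk.\<close>
definition face_perm :: "('d \<Rightarrow> 'd) \<Rightarrow> ('d \<Rightarrow> 'd) \<Rightarrow> 'd set \<Rightarrow> 'd \<Rightarrow> 'd" where
  "face_perm \<sigma> \<alpha> A d = (if \<sigma> d \<in> A then \<alpha> (\<sigma> d) else \<sigma> d)"

text \<open>The face permutation of an alpha-closed dart set U is a permutation: it is rho followed
  by the involution crossing the edges in U.\<close>
lemma face_perm_permutes_general:
  assumes "\<rho> permutes D" "U \<subseteq> D" "\<And>d. d \<in> U \<Longrightarrow> \<alpha> d \<in> U \<and> \<alpha> (\<alpha> d) = d"
  shows "face_perm \<rho> \<alpha> U permutes D"
proof -
  define \<psi> where "\<psi> x = (if x \<in> U then \<alpha> x else x)" for x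
  have \<psi>\<psi>: "\<psi> (\<psi> x) = x" for x unfolding \<psi>_def using assms(3) by auto
  have "\<psi> permutes D" unfolding permutes_def
  proof (intro conjI allI impI)
    fix x assume "x \<notin> D" thus "\<psi> x = x" unfolding \<psi>_def using assms(2) by auto
  next
    fix y show "\<exists>!x. \<psi> x = y"
    proof
      show "\<psi> (\<psi> y) = y" by (rule \<psi>\<psi>)
      fix x assume "\<psi> x = y" thus "x = \<psi> y" using \<psi>\<psi>[of x] by simp
    qed
  qed
  moreover have "face_perm \<rho> \<alpha> U = \<psi> \<circ> \<rho>" unfolding face_perm_def \<psi>_def by auto
  ultimately show ?thesis using permutes_compose[OF assms(1)] by metis
qed

definition adj_rel :: "('d \<Rightarrow> 'v) \<Rightarrow> ('d \<Rightarrow> 'd) \<Rightarrow> 'd set \<Rightarrow> ('v \<times> 'v) set" where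
  "adj_rel vert \<alpha> A = {(vert d, vert (\<alpha> d)) | d. d \<in> A}"

definition components :: "'v set \<Rightarrow> ('d \<Rightarrow> 'v) \<Rightarrow> ('d \<Rightarrow> 'd) \<Rightarrow> 'd set \<Rightarrow> 'v set set" where
  "components V vert \<alpha> A = (\<lambda>x. (adj_rel vert \<alpha> A)\<^sup>* `` {x}) ` V"

locale ribbon =
  fixes V :: "'v set" and D :: "'d set" and vert :: "'d \<Rightarrow> 'v" and \<alpha> \<sigma> :: "'d \<Rightarrow> 'd"
  assumes ribbon: "ribbon_graph V D vert \<alpha> \<sigma>"
begin

lemma finite_V: "finite V" and finite_D: "finite D" and vert_in_V: "d \<in> D \<Longrightarrow> vert d \<in> V"
  and alpha_permutes: "\<alpha> permutes D" and sigma_permutes: "\<sigma> permutes D"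
  and alpha_no_fixpoint: "d \<in> D \<Longrightarrow> \<alpha> d \<noteq> d" and vert_sigma: "d \<in> D \<Longrightarrow> vert (\<sigma> d) = vert d"
  and vert_rotation_reach: "d \<in> D \<Longrightarrow> d' \<in> D \<Longrightarrow> vert d = vert d' \<Longrightarrow> \<exists>k. (\<sigma> ^^ k) d = d'"
  using ribbon unfolding ribbon_graph_def by auto

text \<open>The edge involution alpha is an involution everywhere (it is the identity outside D).\<close>
lemma alpha_alpha[simp]: "\<alpha> (\<alpha> x) = x"
proof (cases "x \<in> D")
  case True thus ?thesis using ribbon unfolding ribbon_graph_def by auto
next
  case False
  hence "\<alpha> x = x" using alpha_permutes unfolding permutes_def by auto
  thus ?thesis by simp
qed

lemma alpha_in_D[simp]: "\<alpha> x \<in> D \<longleftrightarrow> x \<in> D" using permutes_in_image[OF alpha_permutes] by blast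
lemma sigma_in_D[simp]: "\<sigma> x \<in> D \<longleftrightarrow> x \<in> D" using permutes_in_image[OF sigma_permutes] by blast

text \<open>Dart sets of spanning subgraphs: subsets of D closed under alpha.\<close>
definition edge_closed :: "'d set \<Rightarrow> bool" where
  "edge_closed A \<longleftrightarrow> A \<subseteq> D \<and> (\<forall>d\<in>A. \<alpha> d \<in> A)"

lemma edge_closed_iff: "edge_closed A \<Longrightarrow> \<alpha> d \<in> A \<longleftrightarrow> d \<in> A"
  unfolding edge_closed_def by (metis alpha_alpha)

lemma face_perm_permutes:
  assumes "edge_closed A" shows "face_perm \<sigma> \<alpha> A permutes D"
  by (rule face_perm_permutes_general[OF sigma_permutes])
    (use assms in \<open>auto simp: edge_closed_def\<close>)

lemma face_perm_delete_edge:
  assumes "edge_closed A" "e \<in> A"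
  shows "face_perm \<sigma> \<alpha> (A - {e, \<alpha> e}) = transpose e (\<alpha> e) \<circ> face_perm \<sigma> \<alpha> A"
proof
  fix d
  have eD: "e \<in> D" using assms edge_closed_def by auto
  have ne: "\<alpha> e \<noteq> e" using alpha_no_fixpoint[OF eD] .
  have aeA: "\<alpha> e \<in> A" using assms edge_closed_def by auto
  show "face_perm \<sigma> \<alpha> (A - {e, \<alpha> e}) d = (transpose e (\<alpha> e) \<circ> face_perm \<sigma> \<alpha> A) d"
  proof (cases "\<sigma> d = e")
    case True
    hence "face_perm \<sigma> \<alpha> (A - {e, \<alpha> e}) d = e" unfolding face_perm_def by simp
    moreover have "face_perm \<sigma> \<alpha> A d = \<alpha> e" unfolding face_perm_def using True assms(2) by simp
    ultimately show ?thesis by (simp add: transpose_def)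
  next
    case False
    show ?thesis
    proof (cases "\<sigma> d = \<alpha> e")
      case True
      hence "face_perm \<sigma> \<alpha> (A - {e, \<alpha> e}) d = \<alpha> e" unfolding face_perm_def by simp
      moreover have "face_perm \<sigma> \<alpha> A d = e" unfolding face_perm_def using True aeA by simp
      ultimately show ?thesis using ne by (simp add: transpose_def)
    next
      case F2: False
      have "\<alpha> (\<sigma> d) \<noteq> e" using F2 by (metis alpha_alpha)
      moreover have "\<alpha> (\<sigma> d) \<noteq> \<alpha> e" using False by (metis alpha_alpha)
      ultimately show ?thesis using False F2 unfolding face_perm_def by (simp add: transpose_def)
    qed
  qed
qed

abbreviation Adj where "Adj A \<equiv> adj_rel vert \<alpha> A"

lemma adj_rel_sym: assumes "edge_closed A" "(x, y) \<in> Adj A" shows "(y, x) \<in> Adj A"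
proof -
  obtain d where d: "d \<in> A" "x = vert d" "y = vert (\<alpha> d)" using assms(2) unfolding adj_rel_def by auto
  have "\<alpha> d \<in> A" using d(1) assms(1) edge_closed_def by auto
  thus ?thesis unfolding adj_rel_def using d by (auto intro!: exI[of _ "\<alpha> d"])
qed

lemma adj_rtrancl_sym:
  assumes "edge_closed A" "(x, y) \<in> (Adj A)\<^sup>*" shows "(y, x) \<in> (Adj A)\<^sup>*"
proof -
  have "sym (Adj A)" unfolding sym_def using adj_rel_sym[OF assms(1)] by blast
  hence "sym ((Adj A)\<^sup>*)" by (rule sym_rtrancl)
  thus ?thesis using assms(2) unfolding sym_def by blast
qed

lemma component_eq:
  assumes "edge_closed A" "(x, y) \<in> (Adj A)\<^sup>*"
  shows "(Adj A)\<^sup>* `` {x} = (Adj A)\<^sup>* `` {y}"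
  using assms(2) adj_rtrancl_sym[OF assms] by (auto intro: rtrancl_trans)

lemma adj_rel_subset: "edge_closed A \<Longrightarrow> Adj A \<subseteq> V \<times> V"
  unfolding adj_rel_def edge_closed_def using vert_in_V by auto

lemma component_subset: "edge_closed A \<Longrightarrow> x \<in> V \<Longrightarrow> (Adj A)\<^sup>* `` {x} \<subseteq> V"
proof
  fix y assume A: "edge_closed A" "x \<in> V" "y \<in> (Adj A)\<^sup>* `` {x}"
  hence "(x, y) \<in> (Adj A)\<^sup>*" by auto
  thus "y \<in> V" using A(2) adj_rel_subset[OF A(1)] by (induction rule: rtrancl_induct) auto
qed

lemma finite_components: "finite (components V vert \<alpha> A)"
  unfolding components_def using finite_V by simp

abbreviation nfaces where "nfaces A \<equiv> num_cycles (face_perm \<sigma> \<alpha> A) D"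
abbreviation ncomp where "ncomp A \<equiv> card (components V vert \<alpha> A)"

text \<open>The Euler defect 2 (2 k(A) - |V| + |A|/2 - f(A)) of the subgraph with dart set A; it
  is four times the total genus of the subgraph, so it vanishes iff every component is planar.\<close>
definition euler_defect :: "'d set \<Rightarrow> int" where
  "euler_defect A = 4 * int (ncomp A) - 2 * int (card V) + int (card A) - 2 * int (nfaces A)"

lemma ncomp_delete_cycle_edge:
  assumes "edge_closed A" "e \<in> A" "(vert e, vert (\<alpha> e)) \<in> (Adj (A - {e, \<alpha> e}))\<^sup>*"
  shows "components V vert \<alpha> (A - {e, \<alpha> e}) = components V vert \<alpha> A"
proof -
  let ?A' = "A - {e, \<alpha> e}"
  have c': "edge_closed ?A'" using assms(1) unfolding edge_closed_def by (auto dest: arg_cong[where f=\<alpha>])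
  have sub: "Adj ?A' \<subseteq> Adj A" unfolding adj_rel_def by auto
  have "Adj A \<subseteq> (Adj ?A')\<^sup>*"
  proof
    fix p assume "p \<in> Adj A"
    then obtain d where d: "d \<in> A" "p = (vert d, vert (\<alpha> d))" unfolding adj_rel_def by auto
    show "p \<in> (Adj ?A')\<^sup>*"
    proof (cases "d \<in> {e, \<alpha> e}")
      case True
      thus ?thesis using d assms(3) adj_rtrancl_sym[OF c' assms(3)] by auto
    next
      case False
      hence "p \<in> Adj ?A'" using d unfolding adj_rel_def by auto
      thus ?thesis by auto
    qed
  qed
  hence "(Adj A)\<^sup>* = (Adj ?A')\<^sup>*" using rtrancl_subset[OF sub] by blast
  thus ?thesis unfolding components_def by simp
qed

lemma path_after_delete_edge:
  assumes "(x, y) \<in> (Adj A)\<^sup>*"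
  shows "(x, y) \<in> (Adj (A - {e, \<alpha> e}))\<^sup>* \<or> (x, vert e) \<in> (Adj (A - {e, \<alpha> e}))\<^sup>*
           \<or> (x, vert (\<alpha> e)) \<in> (Adj (A - {e, \<alpha> e}))\<^sup>*"
  using assms
proof (induction rule: rtrancl_induct)
  case (step y z)
  show ?case
  proof (cases "(y, z) \<in> Adj (A - {e, \<alpha> e})")
    case True thus ?thesis using step by (meson rtrancl.rtrancl_into_rtrancl)
  next
    case False
    from step(2) obtain d where d: "d \<in> A" "y = vert d" "z = vert (\<alpha> d)" unfolding adj_rel_def by auto
    with False have "d \<in> {e, \<alpha> e}" unfolding adj_rel_def by auto
    hence "y = vert e \<or> y = vert (\<alpha> e)" using d by auto
    thus ?thesis using step(3) by auto
  qed
qed simp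

lemma components_delete_edge:
  fixes e :: 'd
  assumes "edge_closed A"
  defines "S \<equiv> (Adj (A - {e, \<alpha> e}))\<^sup>*"
  shows "components V vert \<alpha> (A - {e, \<alpha> e})
           \<subseteq> {S `` {vert e}, S `` {vert (\<alpha> e)}} \<union> {Cc \<in> components V vert \<alpha> A. vert e \<notin> Cc}"
proof
  let ?T = "(Adj A)\<^sup>*"
  have c': "edge_closed (A - {e, \<alpha> e})"
    using assms(1) unfolding edge_closed_def by (auto dest: arg_cong[where f=\<alpha>])
  have sub: "Adj (A - {e, \<alpha> e}) \<subseteq> Adj A" unfolding adj_rel_def by auto
  fix Cc assume "Cc \<in> components V vert \<alpha> (A - {e, \<alpha> e})"
  then obtain x where x: "x \<in> V" "Cc = S `` {x}" unfolding components_def S_def by auto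
  show "Cc \<in> {S `` {vert e}, S `` {vert (\<alpha> e)}} \<union> {Cc \<in> components V vert \<alpha> A. vert e \<notin> Cc}"
  proof (cases "(x, vert e) \<in> S \<or> (x, vert (\<alpha> e)) \<in> S")
    case True thus ?thesis using component_eq[OF c'] x unfolding S_def by auto
  next
    case False
    have "S `` {x} = ?T `` {x}"
    proof
      show "S `` {x} \<subseteq> ?T `` {x}" using rtrancl_mono[OF sub] unfolding S_def by auto
      show "?T `` {x} \<subseteq> S `` {x}" using path_after_delete_edge False unfolding S_def by auto
    qed
    moreover have "vert e \<notin> ?T `` {x}"
      using path_after_delete_edge[of x "vert e"] False unfolding S_def by auto
    ultimately show ?thesis using x unfolding components_def by auto
  qed
qed

lemma ncomp_delete_edge:
  assumes "edge_closed A" "e \<in> A"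
  shows "ncomp (A - {e, \<alpha> e}) \<le> ncomp A + 1"
proof -
  let ?S = "(Adj (A - {e, \<alpha> e}))\<^sup>*" and ?K = "components V vert \<alpha> A" and ?u = "vert e"
  let ?ends = "{?S `` {?u}, ?S `` {vert (\<alpha> e)}}" and ?old = "{Cc \<in> ?K. ?u \<notin> Cc}"
  have uK: "(Adj A)\<^sup>* `` {?u} \<in> ?K"
    using vert_in_V assms edge_closed_def unfolding components_def by auto
  have "ncomp (A - {e, \<alpha> e}) \<le> card (?ends \<union> ?old)"
    by (rule card_mono[OF _ components_delete_edge[OF assms(1)]]) (use finite_components in auto)
  moreover have "card (?ends \<union> ?old) \<le> card ?ends + card ?old" by (rule card_Un_le)
  moreover have "card ?ends \<le> 2" by (rule card_insert_le_m1) auto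
  moreover have "card ?old \<le> ncomp A - 1"
  proof -
    have "?old \<subseteq> ?K - {(Adj A)\<^sup>* `` {?u}}" by auto
    hence "card ?old \<le> card (?K - {(Adj A)\<^sup>* `` {?u}})"
      by (rule card_mono[rotated]) (use finite_components in auto)
    also have "\<dots> = ncomp A - 1" using uK finite_components by (simp add: card_Diff_singleton)
    finally show ?thesis .
  qed
  moreover have "ncomp A \<ge> 1"
    using uK finite_components by (metis One_nat_def Suc_leI card_gt_0_iff empty_iff)
  ultimately show ?thesis by linarith
qed

lemma face_step_avoiding_edge:
  assumes "x \<in> D" "\<sigma> x \<notin> {e, \<alpha> e}"
  shows "(vert x, vert (face_perm \<sigma> \<alpha> A x)) \<in> (Adj (A - {e, \<alpha> e}))\<^sup>*"
proof (cases "\<sigma> x \<in> A")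
  case True
  hence "(vert (\<sigma> x), vert (\<alpha> (\<sigma> x))) \<in> Adj (A - {e, \<alpha> e})"
    using assms(2) unfolding adj_rel_def by auto
  thus ?thesis using True vert_sigma[OF assms(1)] unfolding face_perm_def by auto
next
  case False thus ?thesis using vert_sigma[OF assms(1)] unfolding face_perm_def by auto
qed

text \<open>If the two darts of an edge lie on different faces, the boundary walk from alpha e back
  to e avoids the edge, so its ends stay connected after deletion.\<close>
lemma face_walk_connects:
  assumes "edge_closed A" "e \<in> A" "\<alpha> e \<notin> orbit_of (face_perm \<sigma> \<alpha> A) e"
  shows "(vert e, vert (\<alpha> e)) \<in> (Adj (A - {e, \<alpha> e}))\<^sup>*"
proof -
  let ?f = "face_perm \<sigma> \<alpha> A" and ?A' = "A - {e, \<alpha> e}"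
  have c': "edge_closed ?A'" using assms(1) unfolding edge_closed_def by (auto dest: arg_cong[where f=\<alpha>])
  have f_permutes: "?f permutes D" using face_perm_permutes[OF assms(1)] .
  have eD: "e \<in> D" using assms edge_closed_def by auto
  define d1 where "d1 = inv \<sigma> e"
  define d2 where "d2 = inv \<sigma> (\<alpha> e)"
  have sd: "\<sigma> d1 = e" "\<sigma> d2 = \<alpha> e" unfolding d1_def d2_def using permutes_inverses(1)[OF sigma_permutes] by auto
  have fd: "?f d1 = \<alpha> e" "?f d2 = e" using sd assms(2) edge_closed_iff[OF assms(1)] unfolding face_perm_def by auto
  have "\<alpha> e \<in> orbit_of ?f d1" using fd f_in_orbit_of by metis
  hence "d1 \<in> orbit_of ?f (\<alpha> e)" using orbit_of_sym[OF f_permutes finite_D] by blast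
  then obtain n where n: "(?f ^^ n) (\<alpha> e) = d1" unfolding orbit_of_def by auto
  define j where "j = (LEAST j. (?f ^^ j) (\<alpha> e) = d1)"
  have jP: "(?f ^^ j) (\<alpha> e) = d1" unfolding j_def by (rule LeastI[of _ n]) (rule n)
  have jmin: "i < j \<Longrightarrow> (?f ^^ i) (\<alpha> e) \<noteq> d1" for i using not_less_Least unfolding j_def by blast
  have nd2: "(?f ^^ i) (\<alpha> e) \<noteq> d2" for i
  proof
    assume "(?f ^^ i) (\<alpha> e) = d2"
    hence "(?f ^^ Suc i) (\<alpha> e) = e" using fd by simp
    hence "e \<in> orbit_of ?f (\<alpha> e)" using funpow_in_orbit_of by metis
    hence "\<alpha> e \<in> orbit_of ?f e" using orbit_of_sym[OF f_permutes finite_D] by blast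
    thus False using assms(3) by blast
  qed
  have step: "(vert x, vert (?f x)) \<in> (Adj ?A')\<^sup>*" if "x \<noteq> d1" "x \<noteq> d2" "x \<in> D" for x
  proof (rule face_step_avoiding_edge[OF that(3)])
    have "\<sigma> x \<noteq> e" "\<sigma> x \<noteq> \<alpha> e" using that sd permutes_inj[OF sigma_permutes] by (metis injD)+
    thus "\<sigma> x \<notin> {e, \<alpha> e}" by simp
  qed
  have aeD: "\<alpha> e \<in> D" using eD by simp
  have "i \<le> j \<Longrightarrow> (vert (\<alpha> e), vert ((?f ^^ i) (\<alpha> e))) \<in> (Adj ?A')\<^sup>*" for i
  proof (induction i)
    case (Suc i)
    have xD: "(?f ^^ i) (\<alpha> e) \<in> D" using subsetD[OF orbit_of_subset[OF f_permutes aeD] funpow_in_orbit_of] .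
    have "(vert ((?f ^^ i) (\<alpha> e)), vert (?f ((?f ^^ i) (\<alpha> e)))) \<in> (Adj ?A')\<^sup>*"
      using step[OF jmin nd2 xD] Suc by auto
    thus ?case using Suc by (auto intro: rtrancl_trans)
  qed simp
  from this[of j] have "(vert (\<alpha> e), vert d1) \<in> (Adj ?A')\<^sup>*" using jP by simp
  moreover have "vert d1 = vert e"
  proof -
    have "d1 \<in> D" unfolding d1_def using eD permutes_in_image[OF permutes_inv[OF sigma_permutes]] by blast
    thus ?thesis using vert_sigma sd by metis
  qed
  ultimately show ?thesis using adj_rtrancl_sym[OF c'] by metis
qed

text \<open>If both darts lie
  on one face, the face splits (f + 1) and k grows by at most one; otherwise two faces merge
  (f - 1) and k is unchanged by the previous lemma.\<close>
lemma euler_defect_delete_edge: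
  assumes "edge_closed A" "e \<in> A"
  shows "euler_defect (A - {e, \<alpha> e}) \<le> euler_defect A"
proof -
  let ?A' = "A - {e, \<alpha> e}" and ?f = "face_perm \<sigma> \<alpha> A"
  have eD: "e \<in> D" using assms edge_closed_def by auto
  have ne: "e \<noteq> \<alpha> e" using alpha_no_fixpoint[OF eD] by auto
  have g: "face_perm \<sigma> \<alpha> ?A' = transpose e (\<alpha> e) \<circ> ?f" by (rule face_perm_delete_edge[OF assms])
  have f_permutes: "?f permutes D" using face_perm_permutes[OF assms(1)] .
  have cardA: "card ?A' + 2 = card A"
  proof -
    have "{e, \<alpha> e} \<subseteq> A" using assms edge_closed_iff by auto
    moreover have "finite A" using assms(1) finite_D edge_closed_def finite_subset by metis
    moreover have "card {e, \<alpha> e} \<le> card A" using calculation by (intro card_mono) auto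
    ultimately show ?thesis using ne by (simp add: card_Diff_subset)
  qed
  show ?thesis
  proof (cases "\<alpha> e \<in> orbit_of ?f e")
    case True
    have "nfaces ?A' = nfaces A + 1" unfolding g using num_cycles_transpose(1)[OF f_permutes finite_D ne eD _ True] eD by simp
    moreover have "ncomp ?A' \<le> ncomp A + 1" using ncomp_delete_edge[OF assms] .
    ultimately show ?thesis unfolding euler_defect_def using cardA by linarith
  next
    case False
    have "nfaces ?A' + 1 = nfaces A" unfolding g using num_cycles_transpose(2)[OF f_permutes finite_D ne eD _ False] eD by simp
    moreover have "ncomp ?A' = ncomp A" using ncomp_delete_cycle_edge[OF assms face_walk_connects[OF assms False]] by simp
    ultimately show ?thesis unfolding euler_defect_def using cardA by linarith
  qed
qed

lemma finite_edge_closed: "edge_closed A \<Longrightarrow> finite A"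
  using finite_D edge_closed_def finite_subset by metis

lemma euler_defect_lower: "edge_closed A \<Longrightarrow> euler_defect {} \<le> euler_defect A"
proof (induction "card A" arbitrary: A rule: less_induct)
  case less
  show ?case
  proof (cases "A = {}")
    case False
    then obtain e where e: "e \<in> A" by auto
    let ?A' = "A - {e, \<alpha> e}"
    have c': "edge_closed ?A'" using less(2) unfolding edge_closed_def by (auto dest: arg_cong[where f=\<alpha>])
    have "card ?A' < card A" by (rule psubset_card_mono) (use e finite_edge_closed[OF less(2)] in auto)
    hence "euler_defect {} \<le> euler_defect ?A'" using less(1) c' by blast
    thus ?thesis using euler_defect_delete_edge[OF less(2) e] by linarith
  qed simp
qed

lemma euler_defect_upper: "edge_closed A \<Longrightarrow> euler_defect A \<le> euler_defect D"
proof (induction "card (D - A)" arbitrary: A rule: less_induct)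
  case less
  show ?case
  proof (cases "A = D")
    case False
    then obtain e where e: "e \<in> D" "e \<notin> A" using less(2) edge_closed_def by auto
    let ?B = "A \<union> {e, \<alpha> e}"
    have cB: "edge_closed ?B" using less(2) e unfolding edge_closed_def by auto
    have ae: "\<alpha> e \<notin> A" using e edge_closed_iff[OF less(2)] by blast
    have eq: "?B - {e, \<alpha> e} = A" using e ae by auto
    have "card (D - ?B) < card (D - A)" by (rule psubset_card_mono) (use e finite_D in auto)
    hence "euler_defect ?B \<le> euler_defect D" using less(1) cB by blast
    moreover have "euler_defect A \<le> euler_defect ?B" using euler_defect_delete_edge[OF cB, of e] eq by simp
    ultimately show ?thesis by linarith
  qed simp
qed

lemma ncomp_empty: "ncomp {} = card V"
proof -
  have "Adj {} = {}" unfolding adj_rel_def by auto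
  hence "components V vert \<alpha> {} = (\<lambda>x. {x}) ` V" unfolding components_def by simp
  thus ?thesis by (simp add: card_image)
qed
end

section \<open>Boundary walks as cycles of the face permutation\<close>

text \<open>For a rotation rho, an
  alpha-closed dart set U (the darts of the edge set B), the boundary walks of the embedded
  subgraph are the orbits of sub_rotation rho B o alpha.  They correspond to the cycles of
  face_perm rho alpha U meeting the entry darts below, the other cycles being the rho-cycles
  (vertices) that avoid U.\<close>
locale boundary_walks =
  fixes D :: "'d set" and \<rho> \<alpha> :: "'d \<Rightarrow> 'd" and U :: "'d set" and B :: "'d set set"
  assumes finite_D: "finite D" and rho_permutes: "\<rho> permutes D" and alpha_permutes: "\<alpha> permutes D" and alpha_alpha: "\<And>x. \<alpha> (\<alpha> x) = x"
    and U_subset: "U \<subseteq> D" and U_alpha: "\<And>d. d \<in> U \<Longrightarrow> \<alpha> d \<in> U" and Union_B: "\<Union>B = U"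
begin

abbreviation f where "f \<equiv> face_perm \<rho> \<alpha> U"
abbreviation h where "h \<equiv> sub_rotation \<rho> B \<circ> \<alpha>"
abbreviation face_cycles where "face_cycles \<equiv> {orbit_of f d | d. d \<in> D}"
definition entry_darts where "entry_darts = {x \<in> D. \<rho> x \<in> U}"

lemma f_permutes: "f permutes D"
  by (rule face_perm_permutes_general[OF rho_permutes U_subset]) (simp add: U_alpha alpha_alpha)

lemma rho_in_D[simp]: "\<rho> x \<in> D \<longleftrightarrow> x \<in> D" using permutes_in_image[OF rho_permutes] by blast
lemma alpha_in_D[simp]: "\<alpha> x \<in> D \<longleftrightarrow> x \<in> D" using permutes_in_image[OF alpha_permutes] by blast

lemma face_perm_outside_entries: "x \<notin> entry_darts \<Longrightarrow> f x = \<rho> x"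
proof -
  assume "x \<notin> entry_darts"
  show "f x = \<rho> x"
  proof (cases "x \<in> D")
    case True thus ?thesis using \<open>x \<notin> entry_darts\<close> unfolding entry_darts_def face_perm_def by auto
  next
    case False
    hence "\<rho> x = x" using rho_permutes unfolding permutes_def by auto
    thus ?thesis using False U_subset unfolding face_perm_def by auto
  qed
qed

lemma f_funpow_in_D: "x \<in> D \<Longrightarrow> (f ^^ n) x \<in> D"
  using subsetD[OF orbit_of_subset[OF f_permutes] funpow_in_orbit_of] .

lemma rotation_between_entries:
  assumes z: "z \<in> entry_darts" and "1 \<le> j"
    and none: "\<And>i. 0 < i \<Longrightarrow> i < j \<Longrightarrow> (f ^^ i) z \<notin> entry_darts"
  shows "(\<rho> ^^ j) (\<alpha> (\<rho> z)) = \<rho> ((f ^^ j) z)"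
  using \<open>1 \<le> j\<close> none
proof (induction j)
  case (Suc j)
  show ?case
  proof (cases "j = 0")
    case True
    have "f z = \<alpha> (\<rho> z)" using z unfolding entry_darts_def face_perm_def by simp
    thus ?thesis using True by simp
  next
    case False
    have "(f ^^ j) z \<notin> entry_darts" using Suc.prems(2)[of j] False by simp
    hence "(f ^^ Suc j) z = \<rho> ((f ^^ j) z)" using face_perm_outside_entries by simp
    moreover have "(\<rho> ^^ j) (\<alpha> (\<rho> z)) = \<rho> ((f ^^ j) z)" using Suc False by simp
    ultimately show ?thesis by simp
  qed
qed simp

lemma next_entry:
  assumes z: "z \<in> entry_darts" and k: "k = (LEAST k. 0 < k \<and> (f ^^ k) z \<in> entry_darts)"
  shows "0 < k" "(f ^^ k) z \<in> entry_darts" "\<rho> ((f ^^ k) z) = h (\<rho> z)"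
proof -
  have zD: "z \<in> D" using z entry_darts_def by auto
  obtain p where p: "p > 0" "(f ^^ p) z = z" using orbit_of_period[OF f_permutes finite_D] by blast
  have kP: "0 < k \<and> (f ^^ k) z \<in> entry_darts" unfolding k by (rule LeastI[of _ p]) (use p z in auto)
  thus "0 < k" "(f ^^ k) z \<in> entry_darts" by auto
  have kmin: "0 < i \<Longrightarrow> i < k \<Longrightarrow> (f ^^ i) z \<notin> entry_darts" for i
    using not_less_Least unfolding k by blast
  have rr: "(\<rho> ^^ j) (\<alpha> (\<rho> z)) = \<rho> ((f ^^ j) z)" if "1 \<le> j" "j \<le> k" for j
    using rotation_between_entries[OF z that(1)] kmin that(2) by simp
  have L: "(LEAST j. 0 < j \<and> (\<rho> ^^ j) (\<alpha> (\<rho> z)) \<in> \<Union>B) = k"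
  proof (rule Least_equality)
    show "0 < k \<and> (\<rho> ^^ k) (\<alpha> (\<rho> z)) \<in> \<Union>B" using kP rr[of k] Union_B entry_darts_def by auto
  next
    fix j assume j: "0 < j \<and> (\<rho> ^^ j) (\<alpha> (\<rho> z)) \<in> \<Union>B"
    show "k \<le> j"
    proof (rule ccontr)
      assume "\<not> k \<le> j"
      hence "(f ^^ j) z \<notin> entry_darts" using kmin j by auto
      moreover have "(f ^^ j) z \<in> D" using f_funpow_in_D zD by blast
      ultimately have "\<rho> ((f ^^ j) z) \<notin> U" using entry_darts_def by auto
      thus False using rr[of j] j \<open>\<not> k \<le> j\<close> Union_B by auto
    qed
  qed
  show "\<rho> ((f ^^ k) z) = h (\<rho> z)"
    unfolding o_apply sub_rotation_def L using rr[of k] kP by simp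
qed

lemma walk_step:
  assumes "z \<in> entry_darts"
  shows "\<exists>z'. z' \<in> orbit_of f z \<and> z' \<in> entry_darts \<and> \<rho> z' = h (\<rho> z)"
proof -
  define k where "k = (LEAST k. 0 < k \<and> (f ^^ k) z \<in> entry_darts)"
  have "(f ^^ k) z \<in> orbit_of f z" by (rule funpow_in_orbit_of)
  moreover have "(f ^^ k) z \<in> entry_darts" "\<rho> ((f ^^ k) z) = h (\<rho> z)" using next_entry[OF assms k_def] by auto
  ultimately show ?thesis by (intro exI[of _ "(f ^^ k) z"]) simp
qed

lemma entry_in_walk_orbit:
  assumes "z \<in> entry_darts" "(f ^^ n) z \<in> entry_darts"
  shows "\<rho> ((f ^^ n) z) \<in> orbit_of h (\<rho> z)"
  using assms
proof (induction n arbitrary: z rule: less_induct)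
  case (less n)
  show ?case
  proof (cases "n = 0")
    case True thus ?thesis using self_in_orbit_of by simp
  next
    case False
    define k where "k = (LEAST k. 0 < k \<and> (f ^^ k) z \<in> entry_darts)"
    note K = next_entry[OF less(2) k_def]
    have "k \<le> n" unfolding k_def by (rule Least_le) (use False less(3) in auto)
    show ?thesis
    proof (cases "k = n")
      case True thus ?thesis using K f_in_orbit_of by metis
    next
      case False
      hence lt: "n - k < n" using K(1) \<open>k \<le> n\<close> by auto
      have eq: "(f ^^ n) z = (f ^^ (n - k)) ((f ^^ k) z)"
        using \<open>k \<le> n\<close> by (metis funpow_add le_add_diff_inverse2 o_apply)
      have "\<rho> ((f ^^ n) z) \<in> orbit_of h (\<rho> ((f ^^ k) z))"
        using less(1)[OF lt K(2)] less(3) eq by metis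
      also have "\<dots> = orbit_of h (h (\<rho> z))" using K(3) by simp
      also have "\<dots> \<subseteq> orbit_of h (\<rho> z)" by (rule orbit_of_step_subset)
      finally show ?thesis .
    qed
  qed
qed

lemma walk_orbit:
  assumes "z \<in> entry_darts"
  shows "orbit_of h (\<rho> z) = \<rho> ` (orbit_of f z \<inter> entry_darts)"
proof
  show "orbit_of h (\<rho> z) \<subseteq> \<rho> ` (orbit_of f z \<inter> entry_darts)"
  proof (rule orbit_of_closed)
    show "\<forall>y\<in>\<rho> ` (orbit_of f z \<inter> entry_darts). h y \<in> \<rho> ` (orbit_of f z \<inter> entry_darts)"
    proof
      fix y assume "y \<in> \<rho> ` (orbit_of f z \<inter> entry_darts)"
      then obtain z1 where z1: "z1 \<in> orbit_of f z" "z1 \<in> entry_darts" "y = \<rho> z1" by auto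
      obtain z' where z': "z' \<in> orbit_of f z1" "z' \<in> entry_darts" "\<rho> z' = h y"
        using walk_step[OF z1(2)] z1 by blast
      have "orbit_of f z1 = orbit_of f z" using orbit_of_eq[OF f_permutes finite_D z1(1)] .
      thus "h y \<in> \<rho> ` (orbit_of f z \<inter> entry_darts)" using z' by (metis IntI image_eqI)
    qed
    have "z \<in> orbit_of f z \<inter> entry_darts" using assms self_in_orbit_of[of z f] by simp
    thus "\<rho> z \<in> \<rho> ` (orbit_of f z \<inter> entry_darts)" by (rule imageI)
  qed
  show "\<rho> ` (orbit_of f z \<inter> entry_darts) \<subseteq> orbit_of h (\<rho> z)"
  proof
    fix y assume "y \<in> \<rho> ` (orbit_of f z \<inter> entry_darts)"
    then obtain x where x: "x \<in> orbit_of f z" "x \<in> entry_darts" "y = \<rho> x" by auto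
    then obtain n where "x = (f ^^ n) z" unfolding orbit_of_def by auto
    thus "y \<in> orbit_of h (\<rho> z)" using entry_in_walk_orbit assms x by blast
  qed
qed

lemma card_cycles_through_entries:
  "card {Ob \<in> face_cycles. Ob \<inter> entry_darts \<noteq> {}} = card {orbit_of h d | d. d \<in> U}"
proof -
  have inj: "inj_on (\<lambda>Ob. \<rho> ` (Ob \<inter> entry_darts)) {Ob \<in> face_cycles. Ob \<inter> entry_darts \<noteq> {}}"
  proof (rule inj_onI)
    fix O1 O2 assume O1: "O1 \<in> {Ob \<in> face_cycles. Ob \<inter> entry_darts \<noteq> {}}" and O2: "O2 \<in> {Ob \<in> face_cycles. Ob \<inter> entry_darts \<noteq> {}}" and eq: "\<rho> ` (O1 \<inter> entry_darts) = \<rho> ` (O2 \<inter> entry_darts)"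
    have "O1 \<inter> entry_darts = O2 \<inter> entry_darts" using eq permutes_inj[OF rho_permutes] by (simp add: inj_image_eq_iff)
    then obtain x where x: "x \<in> O1" "x \<in> O2" using O1 by auto
    obtain d1 where "O1 = orbit_of f d1" using O1 by auto
    moreover obtain d2 where "O2 = orbit_of f d2" using O2 by auto
    ultimately show "O1 = O2" using orbit_of_disjoint[OF f_permutes finite_D] x by blast
  qed
  have img: "(\<lambda>Ob. \<rho> ` (Ob \<inter> entry_darts)) ` {Ob \<in> face_cycles. Ob \<inter> entry_darts \<noteq> {}} = {orbit_of h d | d. d \<in> U}"
  proof (intro set_eqI iffI)
    fix S assume "S \<in> (\<lambda>Ob. \<rho> ` (Ob \<inter> entry_darts)) ` {Ob \<in> face_cycles. Ob \<inter> entry_darts \<noteq> {}}"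
    then obtain Ob where Ob: "Ob \<in> {Ob \<in> face_cycles. Ob \<inter> entry_darts \<noteq> {}}" "S = \<rho> ` (Ob \<inter> entry_darts)" by blast
    then obtain d z where dz: "Ob = orbit_of f d" "z \<in> Ob" "z \<in> entry_darts" by blast
    have "Ob = orbit_of f z" using orbit_of_eq[OF f_permutes finite_D] dz by metis
    hence "S = orbit_of h (\<rho> z)" using Ob walk_orbit[OF dz(3)] by simp
    moreover have "\<rho> z \<in> U" using dz entry_darts_def by auto
    ultimately show "S \<in> {orbit_of h d | d. d \<in> U}" by blast
  next
    fix S assume "S \<in> {orbit_of h d | d. d \<in> U}"
    then obtain y where y: "y \<in> U" "S = orbit_of h y" by blast
    define z where "z = inv \<rho> y"
    have rz: "\<rho> z = y" unfolding z_def using permutes_inverses(1)[OF rho_permutes] by simp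
    have zD: "z \<in> D" using rz y U_subset rho_in_D by blast
    have zT: "z \<in> entry_darts" using zD rz y entry_darts_def by auto
    have "S = \<rho> ` (orbit_of f z \<inter> entry_darts)" using walk_orbit[OF zT] y rz by simp
    moreover have "orbit_of f z \<in> {Ob \<in> face_cycles. Ob \<inter> entry_darts \<noteq> {}}"
    proof -
      have "z \<in> orbit_of f z \<inter> entry_darts" using zT self_in_orbit_of[of z f] by simp
      hence "orbit_of f z \<inter> entry_darts \<noteq> {}" by blast
      thus ?thesis using zD by blast
    qed
    ultimately show "S \<in> (\<lambda>Ob. \<rho> ` (Ob \<inter> entry_darts)) ` {Ob \<in> face_cycles. Ob \<inter> entry_darts \<noteq> {}}" by blast
  qed
  show ?thesis using card_image[OF inj] img by simp
qed

lemma cycles_avoiding_entries: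
  "{Ob \<in> face_cycles. Ob \<inter> entry_darts = {}} = {Ob \<in> {orbit_of \<rho> d | d. d \<in> D}. Ob \<inter> U = {}}"
proof -
  have agree: "\<forall>y. y \<notin> entry_darts \<longrightarrow> f y = \<rho> y" using face_perm_outside_entries by blast
  have agree': "\<forall>y. y \<notin> entry_darts \<longrightarrow> \<rho> y = f y" using face_perm_outside_entries by metis
  show ?thesis
  proof (intro set_eqI iffI)
    fix Ob assume "Ob \<in> {Ob \<in> face_cycles. Ob \<inter> entry_darts = {}}"
    then obtain d where d: "d \<in> D" "Ob = orbit_of f d" "orbit_of f d \<inter> entry_darts = {}" by blast
    have eq: "orbit_of \<rho> d = orbit_of f d" using orbit_of_agree[OF d(3) agree] .
    have "orbit_of \<rho> d \<inter> U = {}"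
    proof (rule ccontr)
      assume "orbit_of \<rho> d \<inter> U \<noteq> {}"
      then obtain u where u: "u \<in> orbit_of \<rho> d" "u \<in> U" by blast
      then obtain v where v: "v \<in> orbit_of \<rho> d" "\<rho> v = u" using orbit_of_has_preimage[OF rho_permutes finite_D] by blast
      have "v \<in> D" using v orbit_of_subset[OF rho_permutes d(1)] by blast
      hence "v \<in> entry_darts" using v u entry_darts_def by auto
      thus False using v eq d(3) by blast
    qed
    thus "Ob \<in> {Ob \<in> {orbit_of \<rho> d | d. d \<in> D}. Ob \<inter> U = {}}" using d eq by blast
  next
    fix Ob assume "Ob \<in> {Ob \<in> {orbit_of \<rho> d | d. d \<in> D}. Ob \<inter> U = {}}"
    then obtain d where d: "d \<in> D" "Ob = orbit_of \<rho> d" "orbit_of \<rho> d \<inter> U = {}" by blast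
    have "orbit_of \<rho> d \<inter> entry_darts = {}"
    proof (rule ccontr)
      assume "orbit_of \<rho> d \<inter> entry_darts \<noteq> {}"
      then obtain x where "x \<in> orbit_of \<rho> d" "x \<in> entry_darts" by blast
      hence "\<rho> x \<in> orbit_of \<rho> d" "\<rho> x \<in> U" using entry_darts_def orbit_of_eq[OF rho_permutes finite_D] f_in_orbit_of by (metis, auto)
      thus False using d(3) by blast
    qed
    moreover have "orbit_of f d = orbit_of \<rho> d" using orbit_of_agree[OF calculation agree'] .
    ultimately show "Ob \<in> {Ob \<in> face_cycles. Ob \<inter> entry_darts = {}}" using d by auto
  qed
qed

lemma face_cycles_count:
  "num_cycles f D = card {orbit_of h d | d. d \<in> U} + card {Ob \<in> {orbit_of \<rho> d | d. d \<in> D}. Ob \<inter> U = {}}"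
proof -
  have "finite face_cycles" using finite_D by simp
  hence "card ({Ob \<in> face_cycles. Ob \<inter> entry_darts \<noteq> {}} \<union> {Ob \<in> face_cycles. Ob \<inter> entry_darts = {}}) = card {Ob \<in> face_cycles. Ob \<inter> entry_darts \<noteq> {}} + card {Ob \<in> face_cycles. Ob \<inter> entry_darts = {}}"
    by (intro card_Un_disjoint) auto
  moreover have "{Ob \<in> face_cycles. Ob \<inter> entry_darts \<noteq> {}} \<union> {Ob \<in> face_cycles. Ob \<inter> entry_darts = {}} = face_cycles" by blast
  ultimately show ?thesis
    unfolding num_cycles_def card_cycles_through_entries cycles_avoiding_entries by simp
qed

end

section \<open>Edges and the subgraphs of the dual\<close>

context ribbon begin

abbreviation E where "E \<equiv> graph_edges D \<alpha>"

lemma edges_eq_image: "E = (\<lambda>d. {d, \<alpha> d}) ` D" unfolding graph_edges_def by auto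
lemma finite_edges: "finite E" unfolding edges_eq_image using finite_D by simp

lemma edge_subset_darts: "e \<in> E \<Longrightarrow> e \<subseteq> D" unfolding edges_eq_image by auto

lemma Union_edges: "\<Union>E = D" unfolding edges_eq_image by auto

lemma edge_eq: "x \<in> e \<Longrightarrow> e \<in> E \<Longrightarrow> e = {x, \<alpha> x}"
  unfolding edges_eq_image by auto

lemma Union_edges_closed: assumes "S \<subseteq> E" shows "edge_closed (\<Union>S)"
proof -
  have "\<Union>S \<subseteq> D" using assms edge_subset_darts by blast
  moreover have "\<forall>d\<in>\<Union>S. \<alpha> d \<in> \<Union>S"
  proof
    fix d assume "d \<in> \<Union>S"
    then obtain e where e: "e \<in> S" "d \<in> e" by blast
    hence "e = {d, \<alpha> d}" using edge_eq assms by blast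
    thus "\<alpha> d \<in> \<Union>S" using e(1) by blast
  qed
  ultimately show ?thesis by (simp add: edge_closed_def)
qed

lemma edges_disjoint: "e1 \<in> E \<Longrightarrow> e2 \<in> E \<Longrightarrow> x \<in> e1 \<Longrightarrow> x \<in> e2 \<Longrightarrow> e1 = e2"
  using edge_eq by metis

lemma card_edge: assumes "e \<in> E" shows "card e = 2"
proof -
  obtain d where d: "d \<in> D" "e = {d, \<alpha> d}" using assms unfolding edges_eq_image by blast
  have "d \<noteq> \<alpha> d" using alpha_no_fixpoint[OF d(1)] by simp
  thus ?thesis using d(2) by simp
qed

lemma card_Union_edges: assumes "S \<subseteq> E" shows "card (\<Union>S) = 2 * card S"
proof -
  have "disjoint S" unfolding disjoint_def using edges_disjoint assms by blast
  moreover have "\<And>A. A \<in> S \<Longrightarrow> finite A" using assms edge_subset_darts finite_D finite_subset by blast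
  ultimately have "card (\<Union>S) = sum card S" by (rule card_Union_disjoint)
  also have "\<dots> = sum (\<lambda>_. 2) S" using assms card_edge by (intro sum.cong) auto
  finally show ?thesis by simp
qed

lemma card_darts: "card D = 2 * card E" using card_Union_edges[of E] Union_edges by simp

lemma darts_complement: assumes "S \<subseteq> E" shows "D - \<Union>(E - S) = \<Union>S"
proof (intro set_eqI iffI)
  fix x assume x: "x \<in> D - \<Union>(E - S)"
  have "{x, \<alpha> x} \<in> E" unfolding edges_eq_image using x by auto
  show "x \<in> \<Union>S"
  proof (rule ccontr)
    assume "x \<notin> \<Union>S"
    hence "{x, \<alpha> x} \<in> E - S" using \<open>{x, \<alpha> x} \<in> E\<close> by blast
    thus False using x by blast
  qed
next
  fix x assume "x \<in> \<Union>S"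
  then obtain e where e: "e \<in> S" "x \<in> e" by auto
  have "x \<notin> \<Union>(E - S)" using edges_disjoint e assms by blast
  moreover have "x \<in> D" using e assms edge_subset_darts by blast
  ultimately show "x \<in> D - \<Union>(E - S)" by blast
qed

lemma dual_isolated_vertices:
  assumes "D \<noteq> {}"
  shows "{v \<in> dual_vertices D \<alpha> \<sigma>. \<forall>d\<in>U. dual_vert \<alpha> \<sigma> d \<noteq> v}
           = {Ob \<in> {orbit_of (\<sigma> \<circ> \<alpha>) d | d. d \<in> D}. Ob \<inter> U = {}}"
proof (intro set_eqI iffI)
  let ?\<rho> = "\<sigma> \<circ> \<alpha>"
  have rho_permutes: "?\<rho> permutes D" using permutes_compose[OF alpha_permutes sigma_permutes] .
  fix v assume "v \<in> {v \<in> dual_vertices D \<alpha> \<sigma>. \<forall>d\<in>U. dual_vert \<alpha> \<sigma> d \<noteq> v}"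
  then obtain x where x: "x \<in> D" "v = orbit_of ?\<rho> x" "\<forall>d\<in>U. orbit_of ?\<rho> d \<noteq> v"
    unfolding dual_vertices_def dual_vert_def using assms by auto
  have "v \<inter> U = {}"
  proof (rule ccontr)
    assume "v \<inter> U \<noteq> {}"
    then obtain d where "d \<in> v" "d \<in> U" by blast
    thus False using x orbit_of_eq[OF rho_permutes finite_D] by metis
  qed
  thus "v \<in> {Ob \<in> {orbit_of ?\<rho> d | d. d \<in> D}. Ob \<inter> U = {}}" using x by blast
next
  let ?\<rho> = "\<sigma> \<circ> \<alpha>"
  fix v assume "v \<in> {Ob \<in> {orbit_of ?\<rho> d | d. d \<in> D}. Ob \<inter> U = {}}"
  then obtain x where x: "x \<in> D" "v = orbit_of ?\<rho> x" "v \<inter> U = {}" by blast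
  have "\<forall>d\<in>U. orbit_of ?\<rho> d \<noteq> v"
    using x(3) self_in_orbit_of[of _ ?\<rho>] by blast
  thus "v \<in> {v \<in> dual_vertices D \<alpha> \<sigma>. \<forall>d\<in>U. dual_vert \<alpha> \<sigma> d \<noteq> v}"
    unfolding dual_vertices_def dual_vert_def using x assms by auto
qed

text \<open>Conjugation by alpha turns the face permutation of the dual on U into the face
  permutation of G on the complementary darts.\<close>
lemma dual_face_perm_conj:
  assumes "edge_closed U"
  shows "num_cycles (face_perm (\<sigma> \<circ> \<alpha>) \<alpha> U) D = nfaces (D - U)"
proof (rule num_cycles_conj)
  fix x
  show "face_perm (\<sigma> \<circ> \<alpha>) \<alpha> U (\<alpha> x) = \<alpha> (face_perm \<sigma> \<alpha> (D - U) x)"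
  proof (cases "x \<in> D")
    case True
    thus ?thesis unfolding face_perm_def by auto
  next
    case False
    hence "\<alpha> x = x" "\<sigma> x = x" using alpha_permutes sigma_permutes unfolding permutes_def by auto
    moreover have "x \<notin> U" using False assms edge_closed_def by auto
    ultimately show ?thesis unfolding face_perm_def by auto
  qed
next
  show "inj \<alpha>" using permutes_inj[OF alpha_permutes] .
  show "\<alpha> ` D = D" using permutes_image[OF alpha_permutes] .
qed

lemma dual_nbhd_circles:
  assumes "S \<subseteq> E" "D \<noteq> {}"
  shows "nbhd_circles (dual_vertices D \<alpha> \<sigma>) D (dual_vert \<alpha> \<sigma>) \<alpha> (dual_rotation \<alpha> \<sigma>) S = nfaces (D - \<Union>S)"
proof -
  let ?\<rho> = "\<sigma> \<circ> \<alpha>" and ?U = "\<Union>S"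
  have rho_permutes: "?\<rho> permutes D" using permutes_compose[OF alpha_permutes sigma_permutes] .
  have cU: "edge_closed ?U" using Union_edges_closed[OF assms(1)] .
  interpret boundary_walks D ?\<rho> \<alpha> ?U S
    by unfold_locales (use finite_D rho_permutes alpha_permutes cU edge_closed_def in auto)
  have "nbhd_circles (dual_vertices D \<alpha> \<sigma>) D (dual_vert \<alpha> \<sigma>) \<alpha> (dual_rotation \<alpha> \<sigma>) S
      = num_cycles (face_perm ?\<rho> \<alpha> ?U) D"
    unfolding nbhd_circles_def dual_rotation_def face_cycles_count dual_isolated_vertices[OF assms(2)]
    by simp
  thus ?thesis using dual_face_perm_conj[OF cU] by simp
qed

lemma dual_valence_sum:
  assumes "D \<noteq> {}"
  shows "(\<Sum>v\<in>dual_vertices D \<alpha> \<sigma>. int (valence D (dual_vert \<alpha> \<sigma>) v) - 2)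
         = int (card D) - 2 * int (card (dual_vertices D \<alpha> \<sigma>))"
proof -
  let ?g = "dual_vert \<alpha> \<sigma>"
  have DV: "dual_vertices D \<alpha> \<sigma> = ?g ` D" unfolding dual_vertices_def dual_vert_def using assms by auto
  have fin: "finite (?g ` D)" using finite_D by simp
  have "D = (\<Union>v\<in>?g ` D. {d \<in> D. ?g d = v})" by auto
  moreover have "card (\<Union>v\<in>?g ` D. {d \<in> D. ?g d = v}) = (\<Sum>v\<in>?g ` D. card {d \<in> D. ?g d = v})"
    by (rule card_UN_disjoint) (use fin finite_D in auto)
  ultimately have "card D = (\<Sum>v\<in>?g ` D. card {d \<in> D. ?g d = v})" by simp
  hence "(\<Sum>v\<in>dual_vertices D \<alpha> \<sigma>. int (valence D ?g v)) = int (card D)"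
    unfolding DV valence_def by (metis of_nat_sum)
  thus ?thesis by (simp add: sum_subtractf)
qed

end

section \<open>Euler's formula for every spanning subgraph of a plane graph\<close>

locale plane_ribbon = ribbon +
  assumes plane: "plane_graph V D vert \<alpha> \<sigma>" and Dne: "D \<noteq> {}"
begin

lemma connected_vertices: "u \<in> V \<Longrightarrow> v \<in> V \<Longrightarrow> (u, v) \<in> (Adj D)\<^sup>*"
  using plane unfolding plane_graph_def graph_connected_def adj_rel_def by auto

lemma vertices_nonempty: "V \<noteq> {}" using plane unfolding plane_graph_def by auto

text \<open>Since the graph is connected and has an edge, every vertex carries a dart.\<close>
lemma vertex_has_dart: assumes "v \<in> V" shows "\<exists>d\<in>D. vert d = v"
proof -
  obtain d0 where d0: "d0 \<in> D" using Dne by auto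
  have "(v, vert d0) \<in> (Adj D)\<^sup>*" using connected_vertices assms vert_in_V[OF d0] by blast
  thus ?thesis
  proof (cases rule: converse_rtranclE)
    case base thus ?thesis using d0 by auto
  next
    case (step y)
    thus ?thesis unfolding adj_rel_def by auto
  qed
qed

lemma rotation_orbit: assumes "d \<in> D" shows "orbit_of \<sigma> d = {d' \<in> D. vert d' = vert d}"
proof
  show "orbit_of \<sigma> d \<subseteq> {d' \<in> D. vert d' = vert d}"
  proof (rule orbit_of_closed)
    show "\<forall>y\<in>{d' \<in> D. vert d' = vert d}. \<sigma> y \<in> {d' \<in> D. vert d' = vert d}" using vert_sigma by auto
  qed (use assms in auto)
  show "{d' \<in> D. vert d' = vert d} \<subseteq> orbit_of \<sigma> d"
  proof
    fix x assume "x \<in> {d' \<in> D. vert d' = vert d}"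
    then obtain k where "(\<sigma> ^^ k) d = x" using vert_rotation_reach[OF assms] by force
    thus "x \<in> orbit_of \<sigma> d" unfolding orbit_of_def by blast
  qed
qed

lemma nfaces_empty: "nfaces {} = card V"
proof -
  have p: "face_perm \<sigma> \<alpha> {} = \<sigma>" unfolding face_perm_def by auto
  have eq: "{orbit_of \<sigma> d | d. d \<in> D} = (\<lambda>v. {d' \<in> D. vert d' = v}) ` V"
  proof (intro set_eqI iffI)
    fix S assume "S \<in> {orbit_of \<sigma> d | d. d \<in> D}"
    then obtain d where "d \<in> D" "S = orbit_of \<sigma> d" by blast
    thus "S \<in> (\<lambda>v. {d' \<in> D. vert d' = v}) ` V" using rotation_orbit vert_in_V by blast
  next
    fix S assume "S \<in> (\<lambda>v. {d' \<in> D. vert d' = v}) ` V"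
    then obtain v where v: "v \<in> V" "S = {d' \<in> D. vert d' = v}" by blast
    then obtain d where "d \<in> D" "vert d = v" using vertex_has_dart by blast
    thus "S \<in> {orbit_of \<sigma> d | d. d \<in> D}" using rotation_orbit v by auto
  qed
  have "inj_on (\<lambda>v. {d' \<in> D. vert d' = v}) V"
  proof (rule inj_onI)
    fix u v assume "u \<in> V" "v \<in> V" "{d' \<in> D. vert d' = u} = {d' \<in> D. vert d' = v}"
    thus "u = v" using vertex_has_dart by blast
  qed
  thus ?thesis unfolding num_cycles_def p eq by (simp add: card_image)
qed

lemma ncomp_all: "ncomp D = 1"
proof -
  have cD: "edge_closed D" unfolding edge_closed_def by auto
  have "components V vert \<alpha> D = {V}"
  proof -
    have "(Adj D)\<^sup>* `` {x} = V" if "x \<in> V" for x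
      using component_subset[OF cD that] connected_vertices[OF that] by auto
    thus ?thesis unfolding components_def using vertices_nonempty by auto
  qed
  thus ?thesis by simp
qed

lemma euler_formula: "int (card V) - int (card E) + int (nfaces D) = 2"
proof -
  have cD: "edge_closed D" unfolding edge_closed_def by auto
  interpret boundary_walks D \<sigma> \<alpha> D E
    by unfold_locales (use finite_D sigma_permutes alpha_permutes Union_edges in auto)
  have c: "nfaces D = card {orbit_of (sub_rotation \<sigma> E \<circ> \<alpha>) d | d. d \<in> D}
                + card {Ob \<in> {orbit_of \<sigma> d | d. d \<in> D}. Ob \<inter> D = {}}" using face_cycles_count by simp
  have z1: "{Ob \<in> {orbit_of \<sigma> d | d. d \<in> D}. Ob \<inter> D = {}} = {}"
  proof -
    have "orbit_of \<sigma> d \<inter> D \<noteq> {}" if "d \<in> D" for d using that self_in_orbit_of[of d \<sigma>] by blast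
    thus ?thesis by blast
  qed
  have z2: "{v \<in> V. \<forall>d\<in>D. vert d \<noteq> v} = {}" using vertex_has_dart by blast
  have "nbhd_circles V D vert \<alpha> \<sigma> E = nfaces D" unfolding nbhd_circles_def Union_edges c z1 z2 by simp
  thus ?thesis using plane unfolding plane_graph_def by simp
qed

lemma euler_defect_zero: assumes "edge_closed A" shows "euler_defect A = 0"
proof -
  have d0: "euler_defect {} = 0" unfolding euler_defect_def using nfaces_empty ncomp_empty by simp
  have cD: "edge_closed D" unfolding edge_closed_def by auto
  have dD: "euler_defect D = 0" unfolding euler_defect_def using euler_formula ncomp_all card_darts by simp
  show ?thesis using euler_defect_lower[OF assms] euler_defect_upper[OF assms] d0 dD by simp
qed

end

section \<open>The chromatic polynomial as a subgraph expansion\<close>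

context ribbon begin

definition monochromatic :: "nat \<Rightarrow> 'd set \<Rightarrow> ('v \<Rightarrow> nat) set" where
  "monochromatic Q A = {c \<in> V \<rightarrow>\<^sub>E {0..<Q}. \<forall>d\<in>A. c (vert d) = c (vert (\<alpha> d))}"

definition lift_coloring :: "'d set \<Rightarrow> ('v set \<Rightarrow> nat) \<Rightarrow> 'v \<Rightarrow> nat" where
  "lift_coloring A g = (\<lambda>x\<in>V. g ((Adj A)\<^sup>* `` {x}))"

lemma lift_coloring_inj:
  "inj_on (lift_coloring A) (components V vert \<alpha> A \<rightarrow>\<^sub>E {0..<Q})"
proof (rule inj_onI)
  fix g1 g2 assume g: "g1 \<in> components V vert \<alpha> A \<rightarrow>\<^sub>E {0..<Q}"
    "g2 \<in> components V vert \<alpha> A \<rightarrow>\<^sub>E {0..<Q}" "lift_coloring A g1 = lift_coloring A g2"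
  show "g1 = g2"
  proof (rule PiE_ext[OF g(1,2)])
    fix C assume "C \<in> components V vert \<alpha> A"
    then obtain x where x: "x \<in> V" "C = (Adj A)\<^sup>* `` {x}" unfolding components_def by auto
    have "lift_coloring A g1 x = lift_coloring A g2 x" using g(3) by simp
    thus "g1 C = g2 C" using x unfolding lift_coloring_def by simp
  qed
qed

lemma monochromatic_eq_lifted:
  assumes "edge_closed A"
  shows "lift_coloring A ` (components V vert \<alpha> A \<rightarrow>\<^sub>E {0..<Q}) = monochromatic Q A"
proof (intro set_eqI iffI)
  let ?K = "components V vert \<alpha> A" and ?S = "(Adj A)\<^sup>*"
  fix c assume "c \<in> lift_coloring A ` (?K \<rightarrow>\<^sub>E {0..<Q})"
  then obtain g where g: "g \<in> ?K \<rightarrow>\<^sub>E {0..<Q}" "c = lift_coloring A g" by blast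
  have "c \<in> V \<rightarrow>\<^sub>E {0..<Q}"
  proof
    fix x assume "x \<in> V"
    hence "?S `` {x} \<in> ?K" unfolding components_def by blast
    thus "c x \<in> {0..<Q}" using g \<open>x \<in> V\<close> unfolding lift_coloring_def by auto
  next
    fix x assume "x \<notin> V" thus "c x = undefined" using g unfolding lift_coloring_def by simp
  qed
  moreover have "\<forall>d\<in>A. c (vert d) = c (vert (\<alpha> d))"
  proof
    fix d assume d: "d \<in> A"
    have dD: "d \<in> D" "\<alpha> d \<in> D" using d assms edge_closed_def by auto
    have "(vert d, vert (\<alpha> d)) \<in> Adj A" using d unfolding adj_rel_def by auto
    hence "?S `` {vert d} = ?S `` {vert (\<alpha> d)}" using component_eq[OF assms] by blast
    thus "c (vert d) = c (vert (\<alpha> d))" using g(2) vert_in_V dD unfolding lift_coloring_def by simp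
  qed
  ultimately show "c \<in> monochromatic Q A" unfolding monochromatic_def by blast
next
  let ?K = "components V vert \<alpha> A" and ?S = "(Adj A)\<^sup>*"
  fix c assume c: "c \<in> monochromatic Q A"
  have const: "(x, y) \<in> ?S \<Longrightarrow> c x = c y" for x y
  proof (induction rule: rtrancl_induct)
    case (step y z)
    then obtain d where "d \<in> A" "y = vert d" "z = vert (\<alpha> d)" unfolding adj_rel_def by auto
    thus ?case using step c unfolding monochromatic_def by auto
  qed simp
  define g where "g = (\<lambda>C\<in>?K. c (SOME x. x \<in> C))"
  have gx: "g (?S `` {x}) = c x" if "x \<in> V" for x
  proof -
    have "?S `` {x} \<in> ?K" using that unfolding components_def by blast
    hence "g (?S `` {x}) = c (SOME y. y \<in> ?S `` {x})" unfolding g_def by simp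
    also have "\<dots> = c x" using const someI[of "\<lambda>y. y \<in> ?S `` {x}" x] by simp
    finally show ?thesis .
  qed
  have "g \<in> ?K \<rightarrow>\<^sub>E {0..<Q}"
  proof
    fix C assume "C \<in> ?K"
    then obtain x where x: "x \<in> V" "C = ?S `` {x}" unfolding components_def by auto
    thus "g C \<in> {0..<Q}" using gx c unfolding monochromatic_def by auto
  next
    fix C assume "C \<notin> ?K" thus "g C = undefined" unfolding g_def by simp
  qed
  moreover have "lift_coloring A g = c"
  proof
    fix x show "lift_coloring A g x = c x"
      using gx c unfolding lift_coloring_def monochromatic_def
      by (cases "x \<in> V") (auto simp: PiE_def extensional_def)
  qed
  ultimately show "c \<in> lift_coloring A ` (?K \<rightarrow>\<^sub>E {0..<Q})" by blast
qed

lemma card_monochromatic: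
  assumes "edge_closed A"
  shows "card (monochromatic Q A) = Q ^ ncomp A"
proof -
  have "card (monochromatic Q A) = card (components V vert \<alpha> A \<rightarrow>\<^sub>E {0..<Q})"
    using card_image[OF lift_coloring_inj] monochromatic_eq_lifted[OF assms] by metis
  also have "\<dots> = Q ^ ncomp A" using finite_components by (simp add: card_PiE)
  finally show ?thesis .
qed

definition mono_edge :: "('v \<Rightarrow> nat) \<Rightarrow> 'd set \<Rightarrow> bool" where
  "mono_edge c e \<longleftrightarrow> (\<forall>d\<in>e. c (vert d) = c (vert (\<alpha> d)))"

lemma proper_iff_no_mono_edge:
  "c \<in> proper_colorings V D vert \<alpha> Q \<longleftrightarrow> c \<in> V \<rightarrow>\<^sub>E {0..<Q} \<and> (\<forall>e\<in>E. \<not> mono_edge c e)"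
proof -
  have "(\<forall>d\<in>D. c (vert d) \<noteq> c (vert (\<alpha> d))) \<longleftrightarrow> (\<forall>e\<in>E. \<not> mono_edge c e)"
  proof
    assume "\<forall>d\<in>D. c (vert d) \<noteq> c (vert (\<alpha> d))"
    thus "\<forall>e\<in>E. \<not> mono_edge c e" unfolding edges_eq_image mono_edge_def by auto
  next
    assume A: "\<forall>e\<in>E. \<not> mono_edge c e"
    show "\<forall>d\<in>D. c (vert d) \<noteq> c (vert (\<alpha> d))"
    proof (intro ballI notI)
      fix d assume d: "d \<in> D" "c (vert d) = c (vert (\<alpha> d))"
      have "{d, \<alpha> d} \<in> E" unfolding edges_eq_image using d by blast
      moreover have "mono_edge c {d, \<alpha> d}" unfolding mono_edge_def using d by auto
      ultimately show False using A by blast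
    qed
  qed
  thus ?thesis unfolding proper_colorings_def by blast
qed

text \<open>Inclusion-exclusion for a single colouring: expanding the product over the edges of
  (1 - [e monochromatic]) gives a signed sum over the sets S of edges on which c is
  monochromatic.\<close>
lemma proper_indicator_expansion:
  assumes c: "c \<in> V \<rightarrow>\<^sub>E {0..<Q}"
  shows "(of_bool (c \<in> proper_colorings V D vert \<alpha> Q) :: int)
           = (\<Sum>S\<in>Pow E. (-1) ^ card S * of_bool (c \<in> monochromatic Q (\<Union>S)))"
proof -
  have "(of_bool (c \<in> proper_colorings V D vert \<alpha> Q) :: int) = (\<Prod>e\<in>E. (- of_bool (mono_edge c e)) + 1)"
    using proper_iff_no_mono_edge c finite_edges by (auto simp: prod_zero_iff)
  also have "\<dots> = (\<Sum>S\<in>Pow E. (\<Prod>e\<in>S. - of_bool (mono_edge c e)) * (\<Prod>e\<in>E - S. 1))"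
    by (rule prod_add[OF finite_edges])
  also have "\<dots> = (\<Sum>S\<in>Pow E. (-1) ^ card S * of_bool (c \<in> monochromatic Q (\<Union>S)))"
  proof (rule sum.cong[OF refl])
    fix S assume S: "S \<in> Pow E"
    have "finite S" using S finite_edges finite_subset by blast
    have "(\<Prod>e\<in>S. - (of_bool (mono_edge c e) :: int)) = (\<Prod>e\<in>S. (-1::int) * of_bool (mono_edge c e))"
      by simp
    also have "\<dots> = (-1) ^ card S * (\<Prod>e\<in>S. of_bool (mono_edge c e))"
      unfolding prod.distrib by simp
    also have "(\<Prod>e\<in>S. (of_bool (mono_edge c e) :: int)) = of_bool (\<forall>e\<in>S. mono_edge c e)"
      using \<open>finite S\<close> by (induction S rule: finite_induct) auto
    also have "(\<forall>e\<in>S. mono_edge c e) \<longleftrightarrow> c \<in> monochromatic Q (\<Union>S)"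
      using c unfolding monochromatic_def mono_edge_def by auto
    finally have "(\<Prod>e\<in>S. - (of_bool (mono_edge c e) :: int))
        = (-1) ^ card S * of_bool (c \<in> monochromatic Q (\<Union>S))" .
    thus "(\<Prod>e\<in>S. - of_bool (mono_edge c e)) * (\<Prod>e\<in>E - S. 1)
        = ((-1) ^ card S * of_bool (c \<in> monochromatic Q (\<Union>S)) :: int)"
      by simp
  qed
  finally show ?thesis .
qed

lemma card_proper_colorings:
  "int (card (proper_colorings V D vert \<alpha> Q)) = (\<Sum>S\<in>Pow E. (-1) ^ card S * int Q ^ ncomp (\<Union>S))"
proof -
  let ?All = "V \<rightarrow>\<^sub>E {0..<Q}"
  have fin: "finite ?All" using finite_V by (simp add: finite_PiE)
  have count: "int (card X) = (\<Sum>c\<in>?All. of_bool (c \<in> X))" if "X \<subseteq> ?All" for X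
  proof -
    have "?All \<inter> {c. c \<in> X} = X" "{c \<in> ?All. c \<in> X} = X" using that by blast+
    thus ?thesis using fin by simp
  qed
  have "int (card (proper_colorings V D vert \<alpha> Q))
      = (\<Sum>c\<in>?All. \<Sum>S\<in>Pow E. (-1) ^ card S * of_bool (c \<in> monochromatic Q (\<Union>S)))"
    using count[of "proper_colorings V D vert \<alpha> Q"] proper_iff_no_mono_edge proper_indicator_expansion
    by (simp add: subset_iff)
  also have "\<dots> = (\<Sum>S\<in>Pow E. (-1) ^ card S * (\<Sum>c\<in>?All. of_bool (c \<in> monochromatic Q (\<Union>S))))"
    by (subst sum.swap) (simp add: sum_distrib_left)
  also have "\<dots> = (\<Sum>S\<in>Pow E. (-1) ^ card S * int Q ^ ncomp (\<Union>S))"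
  proof (rule sum.cong[OF refl])
    fix S assume "S \<in> Pow E"
    hence "int (card (monochromatic Q (\<Union>S))) = int Q ^ ncomp (\<Union>S)"
      using card_monochromatic[OF Union_edges_closed] by simp
    moreover have "monochromatic Q (\<Union>S) \<subseteq> ?All" unfolding monochromatic_def by blast
    ultimately show "(-1) ^ card S * (\<Sum>c\<in>?All. of_bool (c \<in> monochromatic Q (\<Union>S)))
        = (-1) ^ card S * int Q ^ ncomp (\<Union>S)"
      using count by metis
  qed
  finally show ?thesis .
qed

definition subgraph_poly :: "int poly" where
  "subgraph_poly = (\<Sum>S\<in>Pow E. smult ((-1) ^ card S) (monom 1 (ncomp (\<Union>S))))"

lemma poly_subgraph_poly: "poly subgraph_poly (of_nat Q) = int (card (proper_colorings V D vert \<alpha> Q))"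
  unfolding subgraph_poly_def card_proper_colorings by (simp add: poly_sum poly_monom)

lemma chromatic_poly_eq: "chromatic_poly V D vert \<alpha> = subgraph_poly"
  unfolding chromatic_poly_def
proof (rule the_equality)
  show "\<forall>Q. poly subgraph_poly (int Q) = int (card (proper_colorings V D vert \<alpha> Q))" using poly_subgraph_poly by simp
next
  fix p assume p: "\<forall>Q. poly p (int Q) = int (card (proper_colorings V D vert \<alpha> Q))"
  show "p = subgraph_poly"
  proof (rule ccontr)
    assume "p \<noteq> subgraph_poly"
    hence "p - subgraph_poly \<noteq> 0" by simp
    hence fin: "finite {x. poly (p - subgraph_poly) x = 0}" by (rule poly_roots_finite)
    have "range int \<subseteq> {x. poly (p - subgraph_poly) x = 0}" using p poly_subgraph_poly by auto
    hence "finite (range int)" using finite_subset fin by blast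
    moreover have "inj int" by (simp add: inj_def)
    ultimately have "finite (UNIV :: nat set)" using finite_imageD by blast
    thus False by simp
  qed
qed

lemma chromatic_eval:
  fixes x :: "'a :: comm_ring_1"
  shows "poly (map_poly of_int (chromatic_poly V D vert \<alpha>)) x = (\<Sum>S\<in>Pow E. (-1) ^ card S * x ^ ncomp (\<Union>S))"
proof -
  have "map_poly of_int subgraph_poly = (\<Sum>S\<in>Pow E. smult ((-1) ^ card S) (monom (1::'a) (ncomp (\<Union>S))))"
  proof (rule poly_eqI)
    fix n
    show "coeff (map_poly of_int subgraph_poly) n = coeff (\<Sum>S\<in>Pow E. smult ((-1) ^ card S) (monom (1::'a) (ncomp (\<Union>S)))) n"
      unfolding subgraph_poly_def by (simp add: coeff_map_poly coeff_sum of_int_sum) (rule sum.cong, simp_all)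
  qed
  thus ?thesis unfolding chromatic_poly_eq by (simp add: poly_sum poly_monom)
qed

end

section \<open>Laurent series estimates\<close>

text \<open>Laurent series vanishing below degree L (valuation at least L); the estimates below let us
  interchange the infinite sums defining the Euler characteristic.\<close>
definition order_ge :: "int \<Rightarrow> rat fls \<Rightarrow> bool" where
  "order_ge L x \<longleftrightarrow> (\<forall>n<L. x $$ n = 0)"

lemma order_ge_mono: "L' \<le> L \<Longrightarrow> order_ge L x \<Longrightarrow> order_ge L' x"
  unfolding order_ge_def by auto

lemma order_ge_0[simp]: "order_ge L 0" unfolding order_ge_def by simp
lemma order_ge_1: "order_ge 0 1" unfolding order_ge_def by simp

lemma order_ge_add: "order_ge L x \<Longrightarrow> order_ge L y \<Longrightarrow> order_ge L (x + y)" unfolding order_ge_def by simp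
lemma order_ge_uminus: "order_ge L x \<Longrightarrow> order_ge L (- x)" unfolding order_ge_def by simp
lemma order_ge_sum: "(\<And>a. a \<in> A \<Longrightarrow> order_ge L (f a)) \<Longrightarrow> order_ge L (\<Sum>a\<in>A. f a)"
  unfolding order_ge_def by (simp add: fls_nth_sum)

lemma order_ge_sub: assumes "x \<noteq> 0" "order_ge L x" shows "L \<le> fls_subdegree x"
proof (rule ccontr)
  assume "\<not> L \<le> fls_subdegree x"
  hence "x $$ fls_subdegree x = 0" using assms(2) unfolding order_ge_def by auto
  thus False using assms(1) by simp
qed

lemma order_ge_mult: assumes "order_ge a x" "order_ge b y" shows "order_ge (a + b) (x * y)"
proof (cases "x = 0 \<or> y = 0")
  case False
  hence "a \<le> fls_subdegree x" "b \<le> fls_subdegree y" using order_ge_sub assms by auto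
  thus ?thesis unfolding order_ge_def by (auto intro: fls_times_nth_eq0)
qed auto

lemma order_ge_pow: "order_ge a x \<Longrightarrow> order_ge (int k * a) (x ^ k)"
proof (induction k)
  case 0 thus ?case using order_ge_1 by simp
next
  case (Suc k)
  have "order_ge (a + int k * a) (x * x ^ k)" using order_ge_mult[OF Suc(2) Suc(1)[OF Suc(2)]] .
  thus ?case by (simp add: algebra_simps)
qed

lemma order_ge_sign: "order_ge 0 ((-1) ^ k)"
  using order_ge_pow[of 0 "-1" k] order_ge_uminus[OF order_ge_1] by simp

definition Xpow :: "int \<Rightarrow> rat fls" where "Xpow k = fls_X_intpow k"

lemma Xpow_nth: "Xpow k $$ n = (if n = k then 1 else 0)"
  unfolding Xpow_def by simp

lemma Xpow_powi: "(fls_X :: rat fls) powi k = Xpow k"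
  unfolding Xpow_def by simp

lemma Xpow_add: "Xpow (a + b) = Xpow a * Xpow b"
  unfolding Xpow_def by (simp add: fls_X_intpow_times_fls_X_intpow)

lemma Xpow_0: "Xpow 0 = 1" unfolding Xpow_def by simp

lemma order_ge_X: "order_ge k (Xpow k)"
  unfolding order_ge_def Xpow_nth by simp

lemma qq_nth: "qq $$ n = (if n = 1 \<or> n = -1 then 1 else 0)"
  unfolding qq_def by auto

lemma order_ge_qq: "order_ge (-1) qq" unfolding order_ge_def qq_nth by auto

lemma qq_nz: "qq \<noteq> 0"
proof
  assume "qq = 0"
  hence "qq $$ (-1) = 0" by simp
  thus False unfolding qq_nth by simp
qed

lemma qq_subdeg: "fls_subdegree qq = -1"
  by (rule fls_subdegree_eqI) (auto simp: qq_nth)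

lemma order_ge_inv_qq: "order_ge 1 (inverse qq)"
  unfolding order_ge_def using qq_subdeg by auto

lemma order_ge_qq_pow: "order_ge (- int k) (qq ^ k)"
  using order_ge_pow[OF order_ge_qq, of k] by simp

lemma Xpow_sum: "finite A \<Longrightarrow> Xpow (\<Sum>a\<in>A. f a) = (\<Prod>a\<in>A. Xpow (f a))"
  by (induction A rule: finite_induct) (auto simp: Xpow_add Xpow_0)

lemma qq_Xp: "qq = Xpow 1 + Xpow (-1)"
  by (rule fls_eqI) (simp add: qq_nth Xpow_nth)

lemma qq_mult_X: "qq * Xpow j = Xpow (j + 1) + Xpow (j - 1)"
proof -
  have "qq * Xpow j = Xpow 1 * Xpow j + Xpow (-1) * Xpow j"
    unfolding qq_Xp by (simp add: distrib_right)
  also have "\<dots> = Xpow (1 + j) + Xpow (-1 + j)" by (simp only: Xpow_add)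
  finally show ?thesis by (simp add: add.commute)
qed

text \<open>Partial sums of the contribution sum_{k >= 1} (-1)^k q^(2k-1) of the nonzero degrees of P_2.\<close>
definition alt_odd_sum :: "nat \<Rightarrow> rat fls" where
  "alt_odd_sum M = (\<Sum>k\<in>{1..M}. (-1) ^ k * Xpow (2 * int k - 1))"

lemma qq_alt_odd_sum: "qq * alt_odd_sum M = -1 + (-1) ^ M * Xpow (2 * int M)"
proof (induction M)
  case 0 thus ?case unfolding alt_odd_sum_def by (simp add: Xpow_0)
next
  case (Suc M)
  have "alt_odd_sum (Suc M) = alt_odd_sum M + (-1) ^ Suc M * Xpow (2 * int (Suc M) - 1)"
    unfolding alt_odd_sum_def by simp
  hence "qq * alt_odd_sum (Suc M) = qq * alt_odd_sum M + (-1) ^ Suc M * (qq * Xpow (2 * int (Suc M) - 1))"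
    by (simp only: distrib_left mult.left_commute)
  also have "\<dots> = -1 + (-1) ^ M * Xpow (2 * int M)
      + (-1) ^ Suc M * (Xpow (2 * int (Suc M)) + Xpow (2 * int M))"
    unfolding Suc qq_mult_X by (simp add: algebra_simps add.commute)
  also have "\<dots> = -1 + (-1) ^ Suc M * Xpow (2 * int (Suc M))" by (simp add: algebra_simps)
  finally show ?case .
qed

lemma alt_odd_sum_limit: "alt_odd_sum M - (- inverse qq) = (-1) ^ M * Xpow (2 * int M) * inverse qq"
proof -
  have "alt_odd_sum M = inverse qq * (qq * alt_odd_sum M)" using qq_nz by simp
  also have "\<dots> = inverse qq * (-1 + (-1) ^ M * Xpow (2 * int M))" unfolding qq_alt_odd_sum ..
  finally show ?thesis by (simp add: algebra_simps)
qed

lemma order_ge_alt_odd_sum: "order_ge 1 (alt_odd_sum M)"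
  unfolding alt_odd_sum_def
proof (rule order_ge_sum)
  fix k assume "k \<in> {1..M}"
  hence "order_ge (0 + (2 * int k - 1)) ((-1) ^ k * Xpow (2 * int k - 1))"
    by (intro order_ge_mult order_ge_sign order_ge_X)
  moreover have "1 \<le> 0 + (2 * int k - 1)" using \<open>k \<in> {1..M}\<close> by auto
  ultimately show "order_ge 1 ((-1) ^ k * Xpow (2 * int k - 1))" by (rule order_ge_mono[rotated])
qed

lemma order_ge_alt_odd_sum_error: "order_ge (2 * int M + 1) (alt_odd_sum M - (- inverse qq))"
proof -
  have "order_ge (0 + 2 * int M + 1) ((-1) ^ M * Xpow (2 * int M) * inverse qq)"
    by (intro order_ge_mult order_ge_sign order_ge_X order_ge_inv_qq)
  thus ?thesis unfolding alt_odd_sum_limit by simp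
qed

lemma order_ge_pow_diff:
  assumes "order_ge 0 a" "order_ge 0 b" "order_ge L (a - b)"
  shows "order_ge L (a ^ j - b ^ j)"
proof (induction j)
  case (Suc j)
  have eq: "a ^ Suc j - b ^ Suc j = a * (a ^ j - b ^ j) + (a - b) * b ^ j" by (simp add: algebra_simps)
  have "order_ge (0 + L) (a * (a ^ j - b ^ j))" by (rule order_ge_mult[OF assms(1) Suc])
  moreover have "order_ge (L + int j * 0) ((a - b) * b ^ j)" by (rule order_ge_mult[OF assms(3) order_ge_pow[OF assms(2)]])
  ultimately show ?case unfolding eq by (auto intro: order_ge_add)
qed simp

section \<open>The Euler characteristic as a state sum\<close>

text \<open>Step (2) of the outline, abstractly: a state assigns a homological degree to every edge;
  it contributes q^(shifts) qq^(circles of the edges in degree 0), and the Euler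
  characteristic sums these with signs over all degrees.\<close>
locale state_sum =
  fixes E :: "'e set" and circles :: "'e set \<Rightarrow> nat"
  assumes finite_edges: "finite E"
begin

definition p2_shift :: "nat \<Rightarrow> int" where "p2_shift k = (if k = 0 then 0 else 2 * int k - 1)"

definition state_term :: "('e \<Rightarrow> nat) \<Rightarrow> rat fls" where
  "state_term n = Xpow (\<Sum>e\<in>E. p2_shift (n e)) * qq ^ circles {e \<in> E. n e = 0}"
definition states :: "nat \<Rightarrow> ('e \<Rightarrow> nat) set" where
  "states i = {n \<in> E \<rightarrow>\<^sub>E UNIV. (\<Sum>e\<in>E. n e) = i}"
definition chain_class :: "nat \<Rightarrow> rat fls" where
  "chain_class i = (-1) ^ i * (\<Sum>n\<in>states i. state_term n)"
definition circle_bound :: nat where "circle_bound = (\<Sum>B\<in>Pow E. circles B)"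
definition low_states :: "nat \<Rightarrow> ('e \<Rightarrow> nat) set" where "low_states K = {n \<in> E \<rightarrow>\<^sub>E UNIV. (\<Sum>e\<in>E. n e) < K}"
definition box_states :: "nat \<Rightarrow> ('e \<Rightarrow> nat) set" where "box_states K = E \<rightarrow>\<^sub>E {..<K}"
definition signed_term :: "('e \<Rightarrow> nat) \<Rightarrow> rat fls" where "signed_term n = (-1) ^ (\<Sum>e\<in>E. n e) * state_term n"

lemma circles_le_bound: "B \<subseteq> E \<Longrightarrow> circles B \<le> circle_bound"
  unfolding circle_bound_def by (rule member_le_sum) (use finite_edges in auto)

lemma p2_shift_ge: "int k \<le> p2_shift k" unfolding p2_shift_def by auto

text \<open>A state of total degree i contributes only in q-degrees at least i - circle_bound, so
  each q-coefficient of the Euler characteristic is a finite sum.\<close>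
lemma order_ge_state_term: "order_ge (int (\<Sum>e\<in>E. n e) - int circle_bound) (state_term n)"
proof -
  have "order_ge ((\<Sum>e\<in>E. p2_shift (n e)) + - int (circles {e \<in> E. n e = 0})) (state_term n)"
    unfolding state_term_def by (intro order_ge_mult order_ge_X order_ge_qq_pow)
  moreover have "int (\<Sum>e\<in>E. n e) \<le> (\<Sum>e\<in>E. p2_shift (n e))"
    unfolding of_nat_sum by (rule sum_mono) (rule p2_shift_ge)
  moreover have "circles {e \<in> E. n e = 0} \<le> circle_bound" by (rule circles_le_bound) auto
  ultimately show ?thesis by (elim order_ge_mono[rotated]) linarith
qed

lemma order_ge_signed_term: "order_ge (int (\<Sum>e\<in>E. n e) - int circle_bound) (signed_term n)"
  using order_ge_mult[OF order_ge_sign order_ge_state_term] unfolding signed_term_def by simp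

lemma entry_le_total: fixes n :: "'e \<Rightarrow> nat" assumes "e \<in> E" shows "n e \<le> (\<Sum>e\<in>E. n e)"
  using member_le_sum[of e E n] finite_edges assms by auto

lemma order_ge_chain_class: "order_ge (int i - int circle_bound) (chain_class i)"
proof -
  have "order_ge (int i - int circle_bound) (\<Sum>n\<in>states i. state_term n)"
    by (rule order_ge_sum) (use order_ge_state_term states_def in auto)
  thus ?thesis using order_ge_mult[OF order_ge_sign] unfolding chain_class_def by fastforce
qed

lemma low_states_subset: "low_states K \<subseteq> box_states K"
proof
  fix n assume "n \<in> low_states K"
  hence n: "n \<in> E \<rightarrow>\<^sub>E UNIV" "(\<Sum>e\<in>E. n e) < K" unfolding low_states_def by auto
  have "n e < K" if "e \<in> E" for e using entry_le_total[OF that, of n] n(2) by simp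
  thus "n \<in> box_states K" unfolding box_states_def using n(1) by (auto simp: PiE_iff)
qed

lemma finite_box_states: "finite (box_states K)" unfolding box_states_def using finite_edges by (simp add: finite_PiE)
lemma finite_low_states: "finite (low_states K)" using low_states_subset finite_box_states finite_subset by blast

lemma seq_sum_nth:
  assumes "int K > m + int circle_bound"
  shows "fls_seq_sum chain_class $$ m = (\<Sum>i<K. chain_class i $$ m)"
proof -
  define g where "g m = (\<Sum>i\<in>{i. chain_class i $$ m \<noteq> 0}. chain_class i $$ m)" for m
  have z: "chain_class i $$ m' = 0" if "m' < int i - int circle_bound" for i m' using order_ge_chain_class that unfolding order_ge_def by blast
  have "\<forall>\<^sub>\<infinity> n::nat. g (- int n) = 0"
    unfolding MOST_nat
  proof (intro exI allI impI)
    fix n assume "n > circle_bound"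
    hence "{i. chain_class i $$ (- int n) \<noteq> 0} = {}" using z by force
    thus "g (- int n) = 0" unfolding g_def by simp
  qed
  hence nth: "fls_seq_sum chain_class $$ m = g m"
    unfolding fls_seq_sum_def g_def[symmetric] by (simp add: Abs_fls_inverse)
  have sub: "{i. chain_class i $$ m \<noteq> 0} \<subseteq> {..<K}"
  proof
    fix i assume "i \<in> {i. chain_class i $$ m \<noteq> 0}"
    hence "\<not> m < int i - int circle_bound" using z by auto
    thus "i \<in> {..<K}" using assms by auto
  qed
  have "g m = (\<Sum>i<K. chain_class i $$ m)" unfolding g_def
    by (rule sum.mono_neutral_left) (use sub in auto)
  thus ?thesis using nth by simp
qed

lemma sum_chain_classes: "(\<Sum>i<K. chain_class i) = (\<Sum>n\<in>low_states K. signed_term n)"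
proof -
  have "(\<Sum>n\<in>low_states K. signed_term n) = (\<Sum>i<K. \<Sum>n\<in>{n \<in> low_states K. (\<Sum>e\<in>E. n e) = i}. signed_term n)"
    by (rule sum.group[symmetric]) (use finite_low_states in \<open>auto simp: low_states_def\<close>)
  also have "\<dots> = (\<Sum>i<K. chain_class i)"
  proof (rule sum.cong[OF refl])
    fix i assume i: "i \<in> {..<K}"
    have "{n \<in> low_states K. (\<Sum>e\<in>E. n e) = i} = states i" unfolding low_states_def states_def using i by auto
    hence "(\<Sum>n\<in>{n \<in> low_states K. (\<Sum>e\<in>E. n e) = i}. signed_term n) = (\<Sum>n\<in>states i. (-1) ^ i * state_term n)"
      unfolding signed_term_def by (intro sum.cong) (auto simp: states_def)
    thus "(\<Sum>n\<in>{n \<in> low_states K. (\<Sum>e\<in>E. n e) = i}. signed_term n) = chain_class i" unfolding chain_class_def by (simp add: sum_distrib_left)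
  qed
  finally show ?thesis by simp
qed

text \<open>Up to degree K - circle_bound the states of total degree < K may be replaced by the box
  of states with every edge degree < K, which factorises.\<close>
lemma box_sum_nth:
  assumes "m < int K - int circle_bound"
  shows "(\<Sum>n\<in>box_states K. signed_term n) $$ m = (\<Sum>n\<in>low_states K. signed_term n) $$ m"
proof -
  have "(\<Sum>n\<in>box_states K. signed_term n) = (\<Sum>n\<in>box_states K - low_states K. signed_term n) + (\<Sum>n\<in>low_states K. signed_term n)"
    by (rule sum.subset_diff[OF low_states_subset finite_box_states])
  moreover have "(\<Sum>n\<in>box_states K - low_states K. signed_term n) $$ m = 0"
  proof -
    have "order_ge (int K - int circle_bound) (\<Sum>n\<in>box_states K - low_states K. signed_term n)"
    proof (rule order_ge_sum)
      fix n assume n: "n \<in> box_states K - low_states K"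
      hence "K \<le> (\<Sum>e\<in>E. n e)" unfolding box_states_def low_states_def by (auto simp: PiE_def)
      hence "int K \<le> int (\<Sum>e\<in>E. n e)" by linarith
      thus "order_ge (int K - int circle_bound) (signed_term n)" using order_ge_signed_term[of n] by (elim order_ge_mono[rotated]) linarith
    qed
    thus ?thesis using assms unfolding order_ge_def by auto
  qed
  ultimately show ?thesis by simp
qed

text \<open>Signed contribution of one edge in degree k; restricted to the degrees allowed for an
  edge in (k = 0) or out of B.\<close>
definition edge_weight :: "nat \<Rightarrow> rat fls" where "edge_weight k = (-1) ^ k * Xpow (p2_shift k)"
definition edge_weight_if :: "'e set \<Rightarrow> 'e \<Rightarrow> nat \<Rightarrow> rat fls" where
  "edge_weight_if B e k = (if (k = 0) = (e \<in> B) then edge_weight k else 0)"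

lemma signed_term_prod: "signed_term n = (\<Prod>e\<in>E. edge_weight (n e)) * qq ^ circles {e \<in> E. n e = 0}"
proof -
  have "signed_term n = ((\<Prod>e\<in>E. (-1) ^ n e) * (\<Prod>e\<in>E. Xpow (p2_shift (n e)))) * qq ^ circles {e \<in> E. n e = 0}"
    unfolding signed_term_def state_term_def power_sum Xpow_sum[OF finite_edges] by (simp add: mult.assoc)
  also have "(\<Prod>e\<in>E. (-1) ^ n e) * (\<Prod>e\<in>E. Xpow (p2_shift (n e))) = (\<Prod>e\<in>E. edge_weight (n e))"
    unfolding edge_weight_def by (rule prod.distrib[symmetric])
  finally show ?thesis .
qed

lemma edge_weight_if_prod:
  assumes "B \<subseteq> E"
  shows "(if {e \<in> E. n e = 0} = B then \<Prod>e\<in>E. edge_weight (n e) else 0) = (\<Prod>e\<in>E. edge_weight_if B e (n e))"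
proof (cases "{e \<in> E. n e = 0} = B")
  case True
  hence "\<forall>e\<in>E. (n e = 0) = (e \<in> B)" by auto
  thus ?thesis using True unfolding edge_weight_if_def by (auto intro: prod.cong)
next
  case False
  then obtain e where e: "e \<in> E" "(n e = 0) \<noteq> (e \<in> B)" using assms by auto
  hence "edge_weight_if B e (n e) = 0" unfolding edge_weight_if_def by auto
  hence "(\<Prod>e\<in>E. edge_weight_if B e (n e)) = 0" using e finite_edges by (metis prod_zero_iff)
  thus ?thesis using False by simp
qed

lemma edge_weight_0: "edge_weight 0 = 1" unfolding edge_weight_def p2_shift_def by (simp add: Xpow_0)

lemma sum_edge_weight_if:
  assumes "K \<ge> 1"
  shows "(\<Sum>k<K. edge_weight_if B e k) = (if e \<in> B then 1 else alt_odd_sum (K - 1))"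
proof (cases "e \<in> B")
  case True
  have "(\<Sum>k<K. edge_weight_if B e k) = (\<Sum>k<K. if k = 0 then edge_weight k else 0)" unfolding edge_weight_if_def using True by simp
  also have "\<dots> = edge_weight 0" using assms by (simp add: sum.delta)
  finally show ?thesis using True edge_weight_0 by simp
next
  case False
  have "(\<Sum>k<K. edge_weight_if B e k) = (\<Sum>k<K. if k \<noteq> 0 then edge_weight k else 0)" unfolding edge_weight_if_def using False by (intro sum.cong) auto
  also have "\<dots> = (\<Sum>k\<in>{..<K} \<inter> {k. k \<noteq> 0}. edge_weight k)" by (simp add: sum.inter_restrict)
  also have "{..<K} \<inter> {k. k \<noteq> 0} = {1..K - 1}" using assms by auto
  also have "(\<Sum>k\<in>{1..K - 1}. edge_weight k) = alt_odd_sum (K - 1)" unfolding alt_odd_sum_def edge_weight_def p2_shift_def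
    by (intro sum.cong) auto
  finally show ?thesis using False by simp
qed

text \<open>The box sum factorises over the edges: grouping states by their set B of degree-0 edges.\<close>
lemma box_sum_closed_form:
  assumes "K \<ge> 1"
  shows "(\<Sum>n\<in>box_states K. signed_term n) = (\<Sum>B\<in>Pow E. qq ^ circles B * alt_odd_sum (K - 1) ^ card (E - B))"
proof -
  have "(\<Sum>n\<in>box_states K. signed_term n) = (\<Sum>n\<in>box_states K. \<Sum>B\<in>Pow E. if {e \<in> E. n e = 0} = B then (\<Prod>e\<in>E. edge_weight (n e)) * qq ^ circles B else 0)"
  proof (rule sum.cong[OF refl])
    fix n assume "n \<in> box_states K"
    have "{e \<in> E. n e = 0} \<in> Pow E" by auto
    thus "signed_term n = (\<Sum>B\<in>Pow E. if {e \<in> E. n e = 0} = B then (\<Prod>e\<in>E. edge_weight (n e)) * qq ^ circles B else 0)"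
      unfolding signed_term_prod using finite_edges by simp
  qed
  also have "\<dots> = (\<Sum>B\<in>Pow E. \<Sum>n\<in>box_states K. if {e \<in> E. n e = 0} = B then (\<Prod>e\<in>E. edge_weight (n e)) * qq ^ circles B else 0)"
    by (rule sum.swap)
  also have "\<dots> = (\<Sum>B\<in>Pow E. qq ^ circles B * alt_odd_sum (K - 1) ^ card (E - B))"
  proof (rule sum.cong[OF refl])
    fix B assume B: "B \<in> Pow E"
    have "(\<Sum>n\<in>box_states K. if {e \<in> E. n e = 0} = B then (\<Prod>e\<in>E. edge_weight (n e)) * qq ^ circles B else 0)
        = qq ^ circles B * (\<Sum>n\<in>box_states K. \<Prod>e\<in>E. edge_weight_if B e (n e))"
      unfolding sum_distrib_left
    proof (rule sum.cong[OF refl])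
      fix n
      have "(if {e \<in> E. n e = 0} = B then (\<Prod>e\<in>E. edge_weight (n e)) * qq ^ circles B else 0)
            = qq ^ circles B * (if {e \<in> E. n e = 0} = B then \<Prod>e\<in>E. edge_weight (n e) else 0)" by (simp add: mult.commute)
      thus "(if {e \<in> E. n e = 0} = B then (\<Prod>e\<in>E. edge_weight (n e)) * qq ^ circles B else 0) = qq ^ circles B * (\<Prod>e\<in>E. edge_weight_if B e (n e))"
        using edge_weight_if_prod B by simp
    qed
    also have "(\<Sum>n\<in>box_states K. \<Prod>e\<in>E. edge_weight_if B e (n e)) = (\<Prod>e\<in>E. \<Sum>k<K. edge_weight_if B e k)"
      unfolding box_states_def by (rule prod_sum_PiE[symmetric]) (use finite_edges in auto)
    also have "\<dots> = (\<Prod>e\<in>E. if e \<in> B then 1 else alt_odd_sum (K - 1))" using sum_edge_weight_if[OF assms] by simp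
    also have "\<dots> = alt_odd_sum (K - 1) ^ card (E - B)"
    proof -
      have "(\<Prod>e\<in>E. if e \<in> B then 1 else alt_odd_sum (K - 1)) = (\<Prod>e\<in>E - B. alt_odd_sum (K - 1))"
        using finite_edges by (simp add: prod.If_cases Diff_eq)
      thus ?thesis by simp
    qed
    finally show "(\<Sum>n\<in>box_states K. if {e \<in> E. n e = 0} = B then (\<Prod>e\<in>E. edge_weight (n e)) * qq ^ circles B else 0)
        = qq ^ circles B * alt_odd_sum (K - 1) ^ card (E - B)" .
  qed
  finally show ?thesis .
qed

theorem euler_char_closed_form:
  "fls_seq_sum chain_class = (\<Sum>B\<in>Pow E. qq ^ circles B * (- inverse qq) ^ card (E - B))"
proof (rule fls_eqI)
  fix m
  define K where "K = nat \<bar>m\<bar> + circle_bound + 2"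
  have ncomp_delete_edge: "K \<ge> 1" and Km: "int K > m + int circle_bound" and Km2: "m < int K - int circle_bound" unfolding K_def by auto
  have "fls_seq_sum chain_class $$ m = (\<Sum>i<K. chain_class i) $$ m" using seq_sum_nth[OF Km] by (simp add: fls_nth_sum)
  also have "\<dots> = (\<Sum>n\<in>box_states K. signed_term n) $$ m" unfolding sum_chain_classes using box_sum_nth[OF Km2] by simp
  also have "\<dots> = (\<Sum>B\<in>Pow E. qq ^ circles B * alt_odd_sum (K - 1) ^ card (E - B)) $$ m" unfolding box_sum_closed_form[OF ncomp_delete_edge] ..
  also have "\<dots> = (\<Sum>B\<in>Pow E. qq ^ circles B * (- inverse qq) ^ card (E - B)) $$ m"
  proof -
    let ?a = "alt_odd_sum (K - 1)" and ?b = "- inverse qq"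
    have "order_ge (- int circle_bound + (2 * int (K - 1) + 1))
       ((\<Sum>B\<in>Pow E. qq ^ circles B * ?a ^ card (E - B)) - (\<Sum>B\<in>Pow E. qq ^ circles B * ?b ^ card (E - B)))"
      unfolding sum_subtractf[symmetric] right_diff_distrib[symmetric]
    proof (rule order_ge_sum)
      fix B assume B: "B \<in> Pow E"
      have a0: "order_ge 0 ?a" using order_ge_alt_odd_sum by (rule order_ge_mono[rotated]) simp
      have b0: "order_ge 0 ?b" using order_ge_uminus[OF order_ge_inv_qq] by (rule order_ge_mono[rotated]) simp
      have "order_ge (- int (circles B) + (2 * int (K - 1) + 1)) (qq ^ circles B * (?a ^ card (E - B) - ?b ^ card (E - B)))"
        by (intro order_ge_mult order_ge_qq_pow order_ge_pow_diff a0 b0 order_ge_alt_odd_sum_error)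
      moreover have "circles B \<le> circle_bound" using B circles_le_bound by auto
      ultimately show "order_ge (- int circle_bound + (2 * int (K - 1) + 1)) (qq ^ circles B * (?a ^ card (E - B) - ?b ^ card (E - B)))"
        by (elim order_ge_mono[rotated]) simp
    qed
    moreover have "m < - int circle_bound + (2 * int (K - 1) + 1)" unfolding K_def by auto
    ultimately show ?thesis unfolding order_ge_def by auto
  qed
  finally show "fls_seq_sum chain_class $$ m = (\<Sum>B\<in>Pow E. qq ^ circles B * (- inverse qq) ^ card (E - B)) $$ m" .
qed

end

lemma bracket_sum:
  assumes fin: "finite D"
  shows "bracket_euler_char V D vert \<alpha> \<sigma> =
     (\<Sum>B\<in>Pow (graph_edges D \<alpha>). qq ^ nbhd_circles (dual_vertices D \<alpha> \<sigma>) D (dual_vert \<alpha> \<sigma>) \<alpha> (dual_rotation \<alpha> \<sigma>) B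
        * (- inverse qq) ^ card (graph_edges D \<alpha> - B))"
proof -
  let ?E = "graph_edges D \<alpha>"
  let ?c = "nbhd_circles (dual_vertices D \<alpha> \<sigma>) D (dual_vert \<alpha> \<sigma>) \<alpha> (dual_rotation \<alpha> \<sigma>)"
  have finite_edges: "finite ?E" unfolding graph_edges_def using fin by (simp add: setcompr_eq_image)
  interpret state_sum ?E ?c by unfold_locales (rule finite_edges)
  have "spin_chain_class (dual_vertices D \<alpha> \<sigma>) D (dual_vert \<alpha> \<sigma>) \<alpha> (dual_rotation \<alpha> \<sigma>) i = (\<Sum>n\<in>states i. state_term n)" for i
    unfolding spin_chain_class_def states_def spin_states_def
  proof (rule sum.cong[OF refl])
    fix n
    have "spin_summand_shift D \<alpha> n = (\<Sum>e\<in>?E. p2_shift (n e))"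
      unfolding spin_summand_shift_def p2_shift_def P2_term_def by (intro sum.cong) auto
    moreover have "{e \<in> ?E. snd (P2_term (n e))} = {e \<in> ?E. n e = 0}" unfolding P2_term_def by auto
    ultimately show "fls_X powi spin_summand_shift D \<alpha> n *
         qq ^ spin_summand_circles (dual_vertices D \<alpha> \<sigma>) D (dual_vert \<alpha> \<sigma>) \<alpha> (dual_rotation \<alpha> \<sigma>) n = state_term n"
      unfolding state_term_def spin_summand_circles_def Xpow_powi by simp
  qed
  hence "bracket_euler_char V D vert \<alpha> \<sigma> = fls_seq_sum chain_class"
    unfolding bracket_euler_char_def spin_euler_char_def chain_class_def by simp
  thus ?thesis using euler_char_closed_form by simp
qed

section \<open>The main theorem\<close>

lemma power_combination:
  fixes x :: "'a :: field"
  assumes "x \<noteq> 0"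
  shows "x ^ 2 * x powi a * (x ^ b * (- inverse x) ^ c) = (-1) ^ c * x powi (2 + a + int b + - int c)"
proof -
  have "(- inverse x) ^ c = (-1) ^ c * inverse x ^ c" by (rule power_minus)
  also have "inverse x ^ c = x powi (- int c)" by (simp add: power_int_minus power_inverse)
  finally have inv: "(- inverse x) ^ c = (-1) ^ c * x powi (- int c)" .
  have pow: "x ^ b = x powi int b" "x ^ 2 = x powi 2" by simp_all
  have "x ^ 2 * x powi a * (x ^ b * (- inverse x) ^ c)
      = (-1) ^ c * (x powi 2 * x powi a * x powi int b * x powi (- int c))"
    unfolding inv pow by (simp add: ac_simps)
  also have "x powi 2 * x powi a * x powi int b * x powi (- int c) = x powi (2 + a + int b + - int c)"
    by (simp only: power_int_add[OF disjI1[OF assms]])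
  finally show ?thesis .
qed

context ribbon
begin

text \<open>A plane graph without edges is a single vertex; its dual is a single vertex of valence 0
  and <G> is one circle, so both sides of the theorem equal qq^2.\<close>
lemma chromatic_bracket_edgeless:
  assumes "plane_graph V D vert \<alpha> \<sigma>" and "D = {}"
  shows "poly (map_poly of_int (chromatic_poly V D vert \<alpha>)) (qq ^ 2) =
           qq ^ 2
           * qq powi ((\<Sum>v\<in>dual_vertices D \<alpha> \<sigma>. int (valence D (dual_vert \<alpha> \<sigma>) v) - 2) div 2)
           * bracket_euler_char V D vert \<alpha> \<sigma>"
proof -
  have E0: "E = {}" unfolding graph_edges_def assms(2) by simp
  have V1: "card V = 1"
  proof -
    have "nbhd_circles V D vert \<alpha> \<sigma> E = card V" unfolding nbhd_circles_def E0 by simp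
    thus ?thesis using assms(1) E0 unfolding plane_graph_def by simp
  qed
  have DV: "dual_vertices D \<alpha> \<sigma> = {{}}" unfolding dual_vertices_def assms(2) by simp
  have val: "valence D (dual_vert \<alpha> \<sigma>) {} = 0" unfolding valence_def assms(2) by simp
  have c0: "nbhd_circles (dual_vertices D \<alpha> \<sigma>) D (dual_vert \<alpha> \<sigma>) \<alpha> (dual_rotation \<alpha> \<sigma>) {} = 1"
    unfolding nbhd_circles_def DV by simp
  have lhs: "poly (map_poly of_int (chromatic_poly V D vert \<alpha>)) (qq ^ 2) = qq ^ 2"
    using chromatic_eval[of "qq ^ 2"] E0 V1 ncomp_empty by simp
  have exponent: "(\<Sum>v\<in>dual_vertices D \<alpha> \<sigma>. int (valence D (dual_vert \<alpha> \<sigma>) v) - 2) div 2 = -1"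
    using DV val by simp
  have "bracket_euler_char V D vert \<alpha> \<sigma>
      = (\<Sum>B\<in>Pow E. qq ^ nbhd_circles (dual_vertices D \<alpha> \<sigma>) D (dual_vert \<alpha> \<sigma>) \<alpha> (dual_rotation \<alpha> \<sigma>) B
          * (- inverse qq) ^ card (E - B))"
    by (rule bracket_sum[OF finite_D])
  hence bracket: "bracket_euler_char V D vert \<alpha> \<sigma> = qq"
    unfolding E0 using c0 by simp
  have "qq ^ 2 * qq powi (-1) * qq = qq ^ 2"
    using qq_nz by (simp add: power_int_minus field_simps power2_eq_square)
  thus ?thesis unfolding lhs exponent bracket ..
qed

end

context plane_ribbon
begin

lemma card_dual_vertices: "card (dual_vertices D \<alpha> \<sigma>) = nfaces D"
proof -
  have "card (dual_vertices D \<alpha> \<sigma>) = num_cycles (\<sigma> \<circ> \<alpha>) D"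
    unfolding dual_vertices_def num_cycles_def using Dne by simp
  also have "\<dots> = num_cycles (\<alpha> \<circ> \<sigma>) D"
    by (rule num_cycles_conj[where h = \<sigma>]) (auto simp: permutes_inj[OF sigma_permutes] permutes_image[OF sigma_permutes])
  also have "\<alpha> \<circ> \<sigma> = face_perm \<sigma> \<alpha> D"
  proof
    fix x show "(\<alpha> \<circ> \<sigma>) x = face_perm \<sigma> \<alpha> D x"
    proof (cases "x \<in> D")
      case False
      hence "\<sigma> x = x" "\<alpha> x = x" using sigma_permutes alpha_permutes unfolding permutes_def by auto
      thus ?thesis unfolding face_perm_def using False by simp
    qed (simp add: face_perm_def)
  qed
  finally show ?thesis .
qed

lemma prefactor_exponent:
  "(\<Sum>v\<in>dual_vertices D \<alpha> \<sigma>. int (valence D (dual_vert \<alpha> \<sigma>) v) - 2) div 2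
     = int (card E) - int (nfaces D)"
  using dual_valence_sum[OF Dne] card_darts card_dual_vertices by simp

text \<open>The bracket as a sum over subgraphs of G: reindex the dual expansion by complements and
  identify the dual circles with the faces of G (step (3)).\<close>
lemma bracket_subgraph_expansion:
  "bracket_euler_char V D vert \<alpha> \<sigma> = (\<Sum>S\<in>Pow E. qq ^ nfaces (\<Union>S) * (- inverse qq) ^ card S)"
proof -
  let ?c = "nbhd_circles (dual_vertices D \<alpha> \<sigma>) D (dual_vert \<alpha> \<sigma>) \<alpha> (dual_rotation \<alpha> \<sigma>)"
  have "bracket_euler_char V D vert \<alpha> \<sigma> = (\<Sum>B\<in>Pow E. qq ^ ?c B * (- inverse qq) ^ card (E - B))"
    using bracket_sum finite_D by blast
  also have "\<dots> = (\<Sum>S\<in>Pow E. qq ^ ?c (E - S) * (- inverse qq) ^ card (E - (E - S)))"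
    by (rule sum.reindex_bij_witness[of _ "\<lambda>S. E - S" "\<lambda>S. E - S"]) (auto simp: double_diff)
  also have "\<dots> = (\<Sum>S\<in>Pow E. qq ^ nfaces (\<Union>S) * (- inverse qq) ^ card S)"
  proof (rule sum.cong[OF refl])
    fix S assume S: "S \<in> Pow E"
    have "?c (E - S) = nfaces (D - \<Union>(E - S))" by (rule dual_nbhd_circles) (use Dne in auto)
    also have "D - \<Union>(E - S) = \<Union>S" using darts_complement S by auto
    finally show "qq ^ ?c (E - S) * (- inverse qq) ^ card (E - (E - S))
        = qq ^ nfaces (\<Union>S) * (- inverse qq) ^ card S"
      using S by (simp add: double_diff)
  qed
  finally show ?thesis .
qed

text \<open>Euler's formula for the subgraph S and for G itself combine to the exponent identity
  behind the term-by-term comparison.\<close>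
lemma subgraph_exponent:
  assumes "S \<subseteq> E"
  shows "2 + (int (card E) - int (nfaces D)) + int (nfaces (\<Union>S)) + - int (card S)
           = 2 * int (ncomp (\<Union>S))"
proof -
  have "euler_defect (\<Union>S) = 0" using euler_defect_zero[OF Union_edges_closed[OF assms]] .
  moreover have "card (\<Union>S) = 2 * card S" using card_Union_edges[OF assms] .
  ultimately show ?thesis using euler_formula unfolding euler_defect_def by simp
qed

lemma chromatic_bracket_nonempty:
  "poly (map_poly of_int (chromatic_poly V D vert \<alpha>)) (qq ^ 2) =
     qq ^ 2
     * qq powi ((\<Sum>v\<in>dual_vertices D \<alpha> \<sigma>. int (valence D (dual_vert \<alpha> \<sigma>) v) - 2) div 2)
     * bracket_euler_char V D vert \<alpha> \<sigma>"
proof -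
  have matching_term: "qq ^ 2 * qq powi (int (card E) - int (nfaces D))
                * (qq ^ nfaces (\<Union>S) * (- inverse qq) ^ card S)
              = (-1) ^ card S * (qq ^ 2) ^ ncomp (\<Union>S)" if "S \<in> Pow E" for S
    unfolding power_combination[OF qq_nz] subgraph_exponent[OF PowD[OF that]]
    by (simp add: power_int_mult power_mult)
  show ?thesis
    unfolding chromatic_eval prefactor_exponent bracket_subgraph_expansion sum_distrib_left
    using matching_term by (intro sum.cong) (auto simp: mult.assoc)
qed

end

theorem mainTheorem5:
  fixes V :: "'v set" and D :: "'d set" and vert :: "'d \<Rightarrow> 'v"
    and \<alpha> \<sigma> :: "'d \<Rightarrow> 'd"
  assumes "plane_graph V D vert \<alpha> \<sigma>"
  shows "poly (map_poly of_int (chromatic_poly V D vert \<alpha>)) (qq ^ 2) =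
           qq ^ 2
           * qq powi ((\<Sum>v\<in>dual_vertices D \<alpha> \<sigma>. int (valence D (dual_vert \<alpha> \<sigma>) v) - 2) div 2)
           * bracket_euler_char V D vert \<alpha> \<sigma>"
proof -
  interpret ribbon V D vert \<alpha> \<sigma> using assms unfolding plane_graph_def by unfold_locales auto
  show ?thesis
  proof (cases "D = {}")
    case True
    thus ?thesis using chromatic_bracket_edgeless[OF assms] by simp
  next
    case False
    interpret plane_ribbon V D vert \<alpha> \<sigma> by unfold_locales (use assms False in auto)
    show ?thesis by (rule chromatic_bracket_nonempty)
  qed
qed

end
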